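(* Let $K\ge1$ and $m$ be positive integers. For $k=1,\dots,K$ fix $\sigma_k^2>0$, $\lambda_k\in[0,1)$, $\theta_k>0$ with $\sum_k\theta_k=1$, and fix $\mathcal R>0$. Let $\vartheta_{k,l}$ ($0\le k\le K$, $1\le l\le m$) be independent circularly-symmetric complex Gaussian random variables with zero mean and unit variance, let $$|h_k|=\sqrt{\tfrac{\sigma_k^2}{m}}\,\Big\|\sqrt{1-\lambda_k^2}\,(\vartheta_{k,1},\dots,\vartheta_{k,m})^T+\lambda_k(\vartheta_{0,1},\dots,\vartheta_{0,m})^T\Big\|,$$ and for $\gamma>0$ let $\gamma_k=\gamma\theta_k|h_k|^2$ and $p_{out,K}=\Pr\big(\prod_{k=1}^K(1+\gamma_k)<2^{\mathcal R}\big)$. Define $$p_{out\_asy,K}=\Big(1+\sum_{k=1}^K\frac{\lambda_k^2}{1-\lambda_k^2}\Big)^{-m}\gamma^{-mK}g_{\mathbf 0}(2^{\mathcal R})\prod_{k=1}^K\frac{1}{\Gamma(m)}\Big(\frac{m}{\theta_k\sigma_k^2(1-\lambda_k^2)}\Big)^m,$$ where $g_{\mathbf 0}(x)=\int_{\{t\in[0,\infty)^K:\prod_k(1+t_k)\le x\}}\prod_{k=1}^K t_k^{m-1}dt_1\cdots dt_K$. Then $p_{out,K}=p_{out\_asy,K}(1+o(1))$ as $\gamma\to\infty$. Equivalently, with $\ell(\boldsymbol\lambda,K)=\big(1+\sum_{k=1}^K\frac{\lambda_k^2}{1-\lambda_k^2}\big)\prod_{k=1}^K(1-\lambda_k^2)$,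 $$p_{out\_asy,K}=\prod_{k=1}^K\frac{1}{\Gamma(m)}\Big(\frac{m}{\theta_k\sigma_k^2}\Big)^m\cdot\big(\ell(\boldsymbol\lambda,K)\big)^{-m}\cdot\Big(\big(g_{\mathbf 0}(2^{\mathcal R})\big)^{-\frac{1}{mK}}\gamma\Big)^{-mK}.$$
   Context: $o(1)$ denotes a quantity tending to $0$ as $\gamma\to\infty$ (all other parameters fixed). *)

theory Defs
  imports "HOL-Probability.Probability" "HOL-Library.Landau_Symbols"
begin

text \<open>Standard circularly-symmetric complex Gaussian distribution CN(0,1):
  real and imaginary parts independent N(0,1/2).\<close>
definition std_cscg :: "complex measure" where
  "std_cscg = distr
     (density lborel (normal_density 0 (sqrt (1/2))) \<Otimes>\<^sub>M density lborel (normal_density 0 (sqrt (1/2))))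
     borel (\<lambda>(x, y). Complex x y)"

definition abs_h :: "nat \<Rightarrow> (nat \<Rightarrow> real) \<Rightarrow> (nat \<Rightarrow> real) \<Rightarrow> (nat \<times> nat \<Rightarrow> complex) \<Rightarrow> nat \<Rightarrow> real" where
  "abs_h m \<sigma>2 lam z k = sqrt (\<sigma>2 k / real m) *
     sqrt (\<Sum>l=1..m. (cmod (of_real (sqrt (1 - (lam k)\<^sup>2)) * z (k, l) + of_real (lam k) * z (0, l)))\<^sup>2)"

definition p_out :: "'a measure \<Rightarrow> (nat \<times> nat \<Rightarrow> 'a \<Rightarrow> complex) \<Rightarrow> nat \<Rightarrow> nat \<Rightarrow> (nat \<Rightarrow> real)
    \<Rightarrow> (nat \<Rightarrow> real) \<Rightarrow> (nat \<Rightarrow> real) \<Rightarrow> real \<Rightarrow> real \<Rightarrow> real" where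
  "p_out M Z K m \<sigma>2 lam \<theta> R \<gamma> =
     measure M {\<omega> \<in> space M.
       (\<Prod>k\<in>{1..K}. 1 + \<gamma> * \<theta> k * (abs_h m \<sigma>2 lam (\<lambda>i. Z i \<omega>) k)\<^sup>2) < 2 powr R}"

definition g0 :: "nat \<Rightarrow> nat \<Rightarrow> real \<Rightarrow> real" where
  "g0 K m x = (LINT t : {t. (\<forall>k\<in>{1..K}. 0 \<le> t k) \<and> (\<Prod>k\<in>{1..K}. 1 + t k) \<le> x}
                 | PiM {1..K} (\<lambda>_. lborel). (\<Prod>k\<in>{1..K}. t k ^ (m - 1)))"

definition p_out_asy :: "nat \<Rightarrow> nat \<Rightarrow> (nat \<Rightarrow> real) \<Rightarrow> (nat \<Rightarrow> real) \<Rightarrow> (nat \<Rightarrow> real) \<Rightarrow> real \<Rightarrow> real \<Rightarrow> real" where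
  "p_out_asy K m \<sigma>2 lam \<theta> R \<gamma> =
     inverse ((1 + (\<Sum>k=1..K. (lam k)\<^sup>2 / (1 - (lam k)\<^sup>2))) ^ m) *
     inverse (\<gamma> ^ (m * K)) * g0 K m (2 powr R) *
     (\<Prod>k=1..K. (1 / Gamma (real m)) * (real m / (\<theta> k * \<sigma>2 k * (1 - (lam k)\<^sup>2))) ^ m)"



end

(*
  Write c_k = theta_k sigma_k^2 / m. Conditioning on the common vector w = (vartheta_{0,l})_l and
  substituting vartheta_{k,l} = -(lambda_k / sqrt(1 - lambda_k^2)) w_l + v_{k,l} / sqrt(gamma (1 - lambda_k^2))
  turns the outage event into the gamma-independent region prod_k (1 + c_k sum_l |v_{k,l}|^2) < 2^R;
  the Jacobian contributes the factor gamma^(-mK) prod_k (1 - lambda_k^2)^(-m). What remains is the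
  integral over w and over that region of the Gaussian density at the substituted point. The
  coefficient of v tends to 0 as gamma grows, so by dominated convergence the integral tends to its
  value at gamma = 0, which factors into the volume of the region and a Gaussian integral in w. Integrating
  in polar coordinates block by block, the volume is g_0(2^R) prod_k pi^m / ((m-1)! c_k^m), and the
  Gaussian integral is (pi^K (1 + sum_k lambda_k^2 / (1 - lambda_k^2)))^(-m).
*)
theory Submission
  imports Defs "HOL-Real_Asymp.Real_Asymp"
begin

section \<open>Lebesgue measure and the standard Gaussian on the complex plane\<close>

lemma measurable_Complex_pair[measurable]:
  "(\<lambda>(x::real, y::real). Complex x y) \<in> borel_measurable (lborel \<Otimes>\<^sub>M lborel)"
proof -
  have "(\<lambda>(x::real, y::real). Complex x y) = (\<lambda>p. complex_of_real (fst p) + \<i> * complex_of_real (snd p))"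
    by (auto simp: complex_eq_iff)
  then show ?thesis by simp
qed

lemma lborel_complex_eq_distr_pair:
  "(lborel::complex measure) = distr (lborel \<Otimes>\<^sub>M lborel) borel (\<lambda>(x, y). Complex x y)"
proof (rule lborel_eqI)
  fix l u :: complex
  assume le: "\<And>b. b \<in> Basis \<Longrightarrow> l \<bullet> b \<le> u \<bullet> b"
  have le1: "Re l \<le> Re u" "Im l \<le> Im u" using le[of 1] le[of \<i>] by (auto simp: Basis_complex_def)
  have "(\<lambda>(x, y). Complex x y) -` box l u \<inter> space (lborel \<Otimes>\<^sub>M lborel) = {Re l<..<Re u} \<times> {Im l<..<Im u}"
    by (auto simp: box_def Basis_complex_def space_pair_measure)
  then show "emeasure (distr (lborel \<Otimes>\<^sub>M lborel) borel (\<lambda>(x, y). Complex x y)) (box l u) = ennreal (prod ((\<bullet>) (u - l)) Basis)"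
    using le1 by (simp add: emeasure_distr lborel.emeasure_pair_measure_Times Basis_complex_def ennreal_mult)
qed simp

definition cscg_density :: "complex \<Rightarrow> real" where "cscg_density z = exp (- (cmod z)\<^sup>2) / pi"

lemma cscg_density_nonneg: "0 \<le> cscg_density z" by (simp add: cscg_density_def)
lemma cscg_density_measurable[measurable]: "cscg_density \<in> borel_measurable borel"
  unfolding cscg_density_def by simp
lemma continuous_on_cscg_density: "continuous_on UNIV cscg_density"
  unfolding cscg_density_def by (intro continuous_intros) auto
lemma cscg_density_le: "cscg_density z \<le> 1 / pi"
  unfolding cscg_density_def by (simp add: divide_right_mono)

lemma std_cscg_eq_density: "std_cscg = density lborel (\<lambda>z. ennreal (cscg_density z))"
proof -
  define n where "n = normal_density 0 (sqrt (1/2))"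
  have n: "n x = exp (- x\<^sup>2) / sqrt pi" for x
    by (simp add: n_def normal_density_def real_sqrt_divide power_divide)
  have [measurable]: "n \<in> borel_measurable borel" unfolding n_def by simp
  have sf: "sigma_finite_measure (density lborel (\<lambda>x. ennreal (n x)))"
    unfolding n_def using prob_space_normal_density[of "sqrt (1/2)" 0]
    by (simp add: prob_space_imp_sigma_finite)
  have "std_cscg = distr (density (lborel \<Otimes>\<^sub>M lborel) (\<lambda>(x,y). ennreal (n x) * ennreal (n y))) borel (\<lambda>(x, y). Complex x y)"
    unfolding std_cscg_def n_def[symmetric]
    by (subst pair_measure_density) (use sf in \<open>auto simp: lborel.sigma_finite_measure_axioms\<close>)
  also have "(\<lambda>(x,y). ennreal (n x) * ennreal (n y)) = (\<lambda>p. ennreal (cscg_density (case p of (x, y) \<Rightarrow> Complex x y)))"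
  proof
    fix p :: "real \<times> real" obtain x y where p: "p = (x,y)" by (cases p)
    have "n x * n y = cscg_density (Complex x y)"
      by (simp add: n cscg_density_def cmod_def exp_add[symmetric] algebra_simps)
    then show "(case p of (x,y) \<Rightarrow> ennreal (n x) * ennreal (n y)) = ennreal (cscg_density (case p of (x, y) \<Rightarrow> Complex x y))"
      by (simp add: p ennreal_mult[symmetric] n)
  qed
  also have "distr (density (lborel \<Otimes>\<^sub>M lborel) (\<lambda>p. ennreal (cscg_density (case p of (x, y) \<Rightarrow> Complex x y)))) borel (\<lambda>(x, y). Complex x y)
     = density (distr (lborel \<Otimes>\<^sub>M lborel) borel (\<lambda>(x, y). Complex x y)) (\<lambda>z. ennreal (cscg_density z))"
    by (subst density_distr) auto
  finally show ?thesis by (simp add: lborel_complex_eq_distr_pair[symmetric])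
qed

lemma prob_space_std_cscg: "prob_space std_cscg"
  unfolding std_cscg_def
  by (intro prob_space.prob_space_distr prob_space_pair prob_space_normal_density) auto

lemma emeasure_lborel_cmod_sq_atMost:
  "emeasure (lborel::complex measure) {y. (cmod y)\<^sup>2 \<le> a} = ennreal (pi * max a 0)"
proof (cases "a < 0")
  case True
  then have "{y::complex. (cmod y)\<^sup>2 \<le> a} = {}"
    by (auto simp: not_le intro: less_le_trans[OF _ zero_le_power2])
  then show ?thesis using True by simp
next
  case False
  have iff: "cmod y \<le> sqrt a \<longleftrightarrow> (cmod y)\<^sup>2 \<le> a" for y :: complex
    using real_sqrt_le_iff[of "(cmod y)\<^sup>2" a] by simp
  have "{y::complex. (cmod y)\<^sup>2 \<le> a} = cball 0 (sqrt a)"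
    by (rule set_eqI) (simp only: mem_Collect_eq mem_cball dist_norm diff_0 norm_minus_cancel iff)
  then show ?thesis using False by (simp add: emeasure_cball unit_ball_vol_2)
qed

lemma distr_lborel_cmod_sq:
  "distr (lborel::complex measure) borel (\<lambda>y. (cmod y)\<^sup>2) = density lborel (\<lambda>s. ennreal pi * indicator {0..} s)"
proof (rule measure_eqI_generator_eq_countable[where E="range (\<lambda>a::real. {..a})" and \<Omega>=UNIV
      and A="range (\<lambda>n::nat. {..real n})"])
  show "Int_stable (range (\<lambda>a::real. {..a}))"
    by (auto simp: Int_stable_def)
  show "range (\<lambda>a::real. {..a}) \<subseteq> Pow UNIV" by auto
  have sb: "sets (borel::real measure) = sigma_sets UNIV (range (\<lambda>a::real. {..a}))"
    by (subst borel_eq_atMost) (simp add: sets_measure_of)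
  then show "sets (distr (lborel::complex measure) borel (\<lambda>y. (cmod y)\<^sup>2)) = sigma_sets UNIV (range (\<lambda>a::real. {..a}))"
    by simp
  show "sets (density lborel (\<lambda>s. ennreal pi * indicator {0..} s)) = sigma_sets UNIV (range (\<lambda>a::real. {..a}))"
    using sb by simp
  show "range (\<lambda>n::nat. {..real n}) \<subseteq> range (\<lambda>a::real. {..a})" by auto
  show "\<Union> (range (\<lambda>n::nat. {..real n})) = UNIV"
    by (auto intro: real_arch_simple)
  show "countable (range (\<lambda>n::nat. {..real n}))" by auto
  have key: "emeasure (distr (lborel::complex measure) borel (\<lambda>y. (cmod y)\<^sup>2)) {..a}
        = ennreal (pi * max a 0)" for a :: real
  proof -
    have "emeasure (distr (lborel::complex measure) borel (\<lambda>y. (cmod y)\<^sup>2)) {..a}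
        = emeasure lborel {y::complex. (cmod y)\<^sup>2 \<le> a}"
      by (subst emeasure_distr) (auto intro!: arg_cong2[where f=emeasure])
    then show ?thesis by (simp add: emeasure_lborel_cmod_sq_atMost)
  qed
  show "emeasure (distr (lborel::complex measure) borel (\<lambda>y. (cmod y)\<^sup>2)) X
        = emeasure (density lborel (\<lambda>s. ennreal pi * indicator {0..} s)) X"
    if "X \<in> range (\<lambda>a::real. {..a})" for X
  proof -
    from that obtain a where X: "X = {..a}" by auto
    have "emeasure (density lborel (\<lambda>s. ennreal pi * indicator {0..} s)) {..a}
        = (\<integral>\<^sup>+ s. ennreal pi * indicator {0..a} s \<partial>lborel)"
      by (subst emeasure_density) (auto intro!: nn_integral_cong split: split_indicator)
    also have "\<dots> = ennreal (pi * max a 0)"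
      by (subst nn_integral_cmult_indicator) (auto simp: ennreal_mult max_def emeasure_lborel_Icc_eq)
    finally show ?thesis using key X by simp
  qed
  show "emeasure (distr (lborel::complex measure) borel (\<lambda>y. (cmod y)\<^sup>2)) X \<noteq> \<infinity>"
    if "X \<in> range (\<lambda>n::nat. {..real n})" for X
    using that key by auto
qed

lemma nn_integral_cmod_sq:
  assumes [measurable]: "g \<in> borel_measurable borel"
  shows "(\<integral>\<^sup>+ y. g ((cmod y)\<^sup>2) \<partial>(lborel::complex measure)) = (\<integral>\<^sup>+ s. ennreal pi * indicator {0..} s * g s \<partial>lborel)"
proof -
  have "(\<integral>\<^sup>+ y. g ((cmod y)\<^sup>2) \<partial>(lborel::complex measure)) = (\<integral>\<^sup>+ s. g s \<partial>distr lborel borel (\<lambda>y. (cmod y)\<^sup>2))"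
    by (subst nn_integral_distr) auto
  also have "\<dots> = (\<integral>\<^sup>+ s. ennreal pi * indicator {0..} s * g s \<partial>lborel)"
    unfolding distr_lborel_cmod_sq by (subst nn_integral_density) auto
  finally show ?thesis .
qed

lemma nn_integral_gauss_complex:
  assumes t: "t > 0"
  shows "(\<integral>\<^sup>+ y. ennreal (exp (- t * (cmod y)\<^sup>2)) \<partial>(lborel::complex measure)) = ennreal (pi / t)"
proof -
  have "(\<integral>\<^sup>+ y. ennreal (exp (- t * (cmod y)\<^sup>2)) \<partial>(lborel::complex measure))
      = (\<integral>\<^sup>+ s. ennreal pi * indicator {0..} s * ennreal (exp (- t * s)) \<partial>lborel)"
    by (rule nn_integral_cmod_sq[where g="\<lambda>s. ennreal (exp (- t * s))"]) simp
  also have "\<dots> = (\<integral>\<^sup>+ s. ennreal (pi / t) * ennreal (exponential_density t s) \<partial>lborel)"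
    using t by (intro nn_integral_cong) (auto simp: exponential_density_def ennreal_mult[symmetric] split: split_indicator intro!: arg_cong[where f=ennreal] simp: mult_ac)
  also have "\<dots> = ennreal (pi / t) * (\<integral>\<^sup>+ s. ennreal (exponential_density t s) \<partial>lborel)"
    by (rule nn_integral_cmult) simp
  also have "(\<integral>\<^sup>+ s. ennreal (exponential_density t s) \<partial>lborel) = 1"
  proof -
    interpret prob_space "density lborel (exponential_density t)"
      using prob_space_exponential_density[OF t] .
    have "emeasure (density lborel (exponential_density t)) UNIV = 1"
      using emeasure_space_1 by simp
    then show ?thesis by (simp add: emeasure_density)
  qed
  finally show ?thesis by simp
qed

lemma nn_integral_complex_affine:
  fixes f :: "complex \<Rightarrow> ennreal" and c :: real
  assumes [measurable]: "f \<in> borel_measurable borel" and c: "c \<noteq> 0"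
  shows "(\<integral>\<^sup>+x. f x \<partial>lborel) = ennreal (c\<^sup>2) * (\<integral>\<^sup>+x. f (t + c *\<^sub>R x) \<partial>lborel)"
  by (subst lborel_affine[OF c, of t]) (simp add: nn_integral_density nn_integral_distr nn_integral_cmult)

lemma product_sigma_finite_lborel: "product_sigma_finite (\<lambda>_. lborel::'b::euclidean_space measure)"
  by (simp add: product_sigma_finite_def sigma_finite_lborel)

lemma nn_integral_PiM_lborel_affine:
  fixes J :: "'i set" and \<alpha> :: "'i \<Rightarrow> real" and \<beta> :: "'i \<Rightarrow> complex"
  assumes "finite J" "\<And>j. j \<in> J \<Longrightarrow> \<alpha> j \<noteq> 0"
    and "F \<in> borel_measurable (PiM J (\<lambda>_. lborel::complex measure))"
  shows "(\<integral>\<^sup>+ v. F v \<partial>PiM J (\<lambda>_. lborel)) =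
    (\<Prod>j\<in>J. ennreal ((\<alpha> j)\<^sup>2)) * (\<integral>\<^sup>+ v. F (\<lambda>j\<in>J. \<beta> j + \<alpha> j *\<^sub>R v j) \<partial>PiM J (\<lambda>_. lborel))"
  using assms
proof (induction J arbitrary: F rule: finite_induct)
  case empty
  interpret P: product_sigma_finite "\<lambda>_::'i. lborel::complex measure" by (rule product_sigma_finite_lborel)
  show ?case by (simp add: PiM_empty nn_integral_count_space_finite)
next
  case (insert j J)
  interpret P: product_sigma_finite "\<lambda>_::'i. lborel::complex measure" by (rule product_sigma_finite_lborel)
  note F[measurable] = insert.prems(2)
  have aj: "\<alpha> j \<noteq> 0" using insert.prems by auto
  define G where "G x = (\<integral>\<^sup>+ y. F (x(j := \<beta> j + \<alpha> j *\<^sub>R y)) \<partial>lborel)" for x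
  have [measurable]: "G \<in> borel_measurable (PiM J (\<lambda>_. lborel))"
    unfolding G_def by measurable
  have "(\<integral>\<^sup>+ v. F v \<partial>PiM (insert j J) (\<lambda>_. lborel)) = (\<integral>\<^sup>+ x. (\<integral>\<^sup>+ y. F (x(j := y)) \<partial>lborel) \<partial>PiM J (\<lambda>_. lborel))"
    by (rule P.product_nn_integral_insert) (use insert in auto)
  also have "\<dots> = (\<integral>\<^sup>+ x. ennreal ((\<alpha> j)\<^sup>2) * G x \<partial>PiM J (\<lambda>_. lborel))"
  proof (rule nn_integral_cong)
    fix x assume x: "x \<in> space (PiM J (\<lambda>_. lborel::complex measure))"
    have [measurable]: "(\<lambda>y. F (x(j := y))) \<in> borel_measurable lborel"
      using measurable_comp[OF measurable_component_update[OF x insert(2)] F] by (simp add: comp_def)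
    show "(\<integral>\<^sup>+ y. F (x(j := y)) \<partial>lborel) = ennreal ((\<alpha> j)\<^sup>2) * G x"
      unfolding G_def by (rule nn_integral_complex_affine[OF _ aj]) simp
  qed
  also have "\<dots> = ennreal ((\<alpha> j)\<^sup>2) * (\<integral>\<^sup>+ x. G x \<partial>PiM J (\<lambda>_. lborel))"
    by (rule nn_integral_cmult) simp
  also have "(\<integral>\<^sup>+ x. G x \<partial>PiM J (\<lambda>_. lborel)) = (\<Prod>i\<in>J. ennreal ((\<alpha> i)\<^sup>2)) * (\<integral>\<^sup>+ v. G (\<lambda>i\<in>J. \<beta> i + \<alpha> i *\<^sub>R v i) \<partial>PiM J (\<lambda>_. lborel))"
    by (rule insert.IH) (use insert.prems in auto)
  also have "(\<integral>\<^sup>+ v. G (\<lambda>i\<in>J. \<beta> i + \<alpha> i *\<^sub>R v i) \<partial>PiM J (\<lambda>_. lborel))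
      = (\<integral>\<^sup>+ v. (\<integral>\<^sup>+ y. F (\<lambda>i\<in>insert j J. \<beta> i + \<alpha> i *\<^sub>R (v(j := y)) i) \<partial>lborel) \<partial>PiM J (\<lambda>_. lborel))"
  proof (rule nn_integral_cong)
    fix v
    have "(\<lambda>i\<in>J. \<beta> i + \<alpha> i *\<^sub>R v i)(j := \<beta> j + \<alpha> j *\<^sub>R y) = (\<lambda>i\<in>insert j J. \<beta> i + \<alpha> i *\<^sub>R (v(j := y)) i)" for y
      using insert(2) by (auto simp: restrict_def fun_eq_iff)
    then show "G (\<lambda>i\<in>J. \<beta> i + \<alpha> i *\<^sub>R v i) = (\<integral>\<^sup>+ y. F (\<lambda>i\<in>insert j J. \<beta> i + \<alpha> i *\<^sub>R (v(j := y)) i) \<partial>lborel)"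
      unfolding G_def by simp
  qed
  also have "\<dots> = (\<integral>\<^sup>+ v. F (\<lambda>i\<in>insert j J. \<beta> i + \<alpha> i *\<^sub>R v i) \<partial>PiM (insert j J) (\<lambda>_. lborel))"
    by (rule P.product_nn_integral_insert[symmetric]) (use insert in auto)
  finally show ?case
    by (simp only: prod.insert[OF insert(1,2)] mult.assoc)
qed

lemma PiM_std_cscg_eq_density:
  fixes J :: "'i set"
  assumes J: "finite J"
  shows "PiM J (\<lambda>_. std_cscg) = density (PiM J (\<lambda>_. lborel)) (\<lambda>z. \<Prod>j\<in>J. ennreal (cscg_density (z j)))"
proof -
  interpret N: prob_space std_cscg by (rule prob_space_std_cscg)
  interpret P: product_sigma_finite "\<lambda>_::'i. std_cscg"
    by (simp add: product_sigma_finite_def N.sigma_finite_measure_axioms)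
  interpret L: product_sigma_finite "\<lambda>_::'i. lborel::complex measure" by (rule product_sigma_finite_lborel)
  have sN: "sets std_cscg = sets borel" by (simp add: std_cscg_eq_density)
  show ?thesis
  proof (rule P.PiM_eqI[symmetric, OF J])
    show "sets (density (PiM J (\<lambda>_. lborel)) (\<lambda>z. \<Prod>j\<in>J. ennreal (cscg_density (z j)))) = sets (PiM J (\<lambda>_. std_cscg))"
      using sN by (simp cong: sets_PiM_cong)
    fix A assume A: "\<And>i. i \<in> J \<Longrightarrow> A i \<in> sets std_cscg"
    then have A': "\<And>i. i \<in> J \<Longrightarrow> A i \<in> sets borel" using sN by auto
    have "emeasure (density (PiM J (\<lambda>_. lborel)) (\<lambda>z. \<Prod>j\<in>J. ennreal (cscg_density (z j)))) (PiE J A)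
       = (\<integral>\<^sup>+ z. (\<Prod>j\<in>J. ennreal (cscg_density (z j))) * indicator (PiE J A) z \<partial>PiM J (\<lambda>_. lborel))"
      using A' J by (subst emeasure_density) (auto intro!: sets_PiM_I_finite)
    also have "\<dots> = (\<integral>\<^sup>+ z. (\<Prod>j\<in>J. ennreal (cscg_density (z j)) * indicator (A j) (z j)) \<partial>PiM J (\<lambda>_. lborel))"
    proof (rule nn_integral_cong)
      fix z assume "z \<in> space (PiM J (\<lambda>_. lborel::complex measure))"
      then have z: "z \<in> extensional J" by (simp add: space_PiM PiE_def)
      have "indicator (PiE J A) z = (\<Prod>j\<in>J. indicator (A j) (z j) :: ennreal)"
        using z J by (auto simp: indicator_def PiE_def Pi_def prod_ennreal[symmetric])
      then show "(\<Prod>j\<in>J. ennreal (cscg_density (z j))) * indicator (PiE J A) z = (\<Prod>j\<in>J. ennreal (cscg_density (z j)) * indicator (A j) (z j))"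
        by (simp add: prod.distrib)
    qed
    also have "\<dots> = (\<Prod>j\<in>J. (\<integral>\<^sup>+ y. ennreal (cscg_density y) * indicator (A j) y \<partial>lborel))"
      using L.product_nn_integral_prod[OF J, of "\<lambda>j y. ennreal (cscg_density y) * indicator (A j) y"] A' by simp
    also have "\<dots> = (\<Prod>j\<in>J. emeasure std_cscg (A j))"
      using A' by (intro prod.cong refl) (simp add: std_cscg_eq_density emeasure_density)
    finally show "emeasure (density (PiM J (\<lambda>_. lborel)) (\<lambda>z. \<Prod>j\<in>J. ennreal (cscg_density (z j)))) (PiE J A) = (\<Prod>j\<in>J. emeasure std_cscg (A j))" .
  qed
qed

lemma sets_PiM_std_cscg: "sets (PiM I (\<lambda>_. std_cscg)) = sets (PiM I (\<lambda>_. lborel::complex measure))"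
  by (intro sets_PiM_cong) (auto simp: std_cscg_eq_density)

section \<open>Integrating functions of squared norms\<close>

text \<open>The derivative in \<open>s\<close> of \<open>\<pi>\<^sup>n s\<^sup>n / n!\<close>, the volume of the ball of squared radius \<open>s\<close> in \<open>\<complex>\<^sup>n\<close>.\<close>

definition ball_volume_density :: "nat \<Rightarrow> real \<Rightarrow> real" where
  "ball_volume_density n s = (if 0 \<le> s then pi ^ n * s ^ (n - 1) / fact (n - 1) else 0)"

lemma ball_volume_density_nonneg: "0 \<le> ball_volume_density n s" by (simp add: ball_volume_density_def)
lemma ball_volume_density_measurable[measurable]: "ball_volume_density n \<in> borel_measurable borel"
  unfolding ball_volume_density_def by measurable

lemma nn_integral_ball_volume_density_atMost:
  assumes n: "n \<ge> 1"
  shows "(\<integral>\<^sup>+ s. ennreal (ball_volume_density n s) * indicator {..u} s \<partial>lborel) = ennreal (if 0 \<le> u then pi ^ n * u ^ n / fact n else 0)"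
proof (cases "0 \<le> u")
  case False
  have "(\<integral>\<^sup>+ s. ennreal (ball_volume_density n s) * indicator {..u} s \<partial>lborel) = (\<integral>\<^sup>+ s. (0::ennreal) \<partial>(lborel::real measure))"
    by (rule nn_integral_cong) (use False in \<open>auto simp: ball_volume_density_def indicator_def\<close>)
  then show ?thesis using False by simp
next
  case True
  have "(\<integral>\<^sup>+ s. ennreal (ball_volume_density n s) * indicator {..u} s \<partial>lborel) = (\<integral>\<^sup>+ s\<in>{0..u}. ennreal (pi ^ n * s ^ (n - 1) / fact (n - 1)) \<partial>lborel)"
    by (intro nn_integral_cong) (auto simp: ball_volume_density_def indicator_def)
  also have "\<dots> = ennreal (pi ^ n * u ^ n / fact n - pi ^ n * 0 ^ n / fact n)"
  proof (rule nn_integral_FTC_Icc)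
    fix x :: real assume "x \<in> {0..u}"
    have "((\<lambda>s. pi ^ n * s ^ n / fact n) has_real_derivative pi ^ n * (real n * x ^ (n - 1)) / fact n) (at x)"
      by (auto intro!: derivative_eq_intros)
    moreover have "pi ^ n * (real n * x ^ (n - 1)) / fact n = pi ^ n * x ^ (n - 1) / fact (n - 1)"
    proof -
      have f: "fact n = real n * (fact (n - 1) :: real)" using n by (simp add: fact_reduce)
      show ?thesis using n by (simp add: f field_simps)
    qed
    ultimately show "((\<lambda>s. pi ^ n * s ^ n / fact n) has_real_derivative pi ^ n * x ^ (n - 1) / fact (n - 1)) (at x)"
      by simp
  qed (use True in auto)
  also have "pi ^ n * (0::real) ^ n / fact n = 0" using n by simp
  finally show ?thesis using True by simp
qed

lemma pred_fst_atLeast_snd[measurable]: "Measurable.pred (borel \<Otimes>\<^sub>M borel) (\<lambda>x::real\<times>real. fst x \<in> {snd x..})"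
  unfolding atLeast_iff by measurable

lemma sum_cmod_sq_fun_upd:
  assumes "j \<notin> J" "finite J"
  shows "(\<Sum>i\<in>insert j J. (cmod ((x(j := y)) i))\<^sup>2) = (cmod y)\<^sup>2 + (\<Sum>i\<in>J. (cmod (x i))\<^sup>2)"
proof -
  have "(\<Sum>i\<in>J. (cmod ((x(j := y)) i))\<^sup>2) = (\<Sum>i\<in>J. (cmod (x i))\<^sup>2)"
    using assms by (intro sum.cong) auto
  then show ?thesis using assms by simp
qed

lemma nn_integral_ball_volume_density_Suc:
  assumes n1: "n \<ge> 1" and g[measurable]: "g \<in> borel_measurable (borel :: real measure)"
  shows "(\<integral>\<^sup>+ t. ennreal pi * indicator {0..} t * (\<integral>\<^sup>+ s. ennreal (ball_volume_density n s) * g (t + s) \<partial>lborel) \<partial>lborel)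
       = (\<integral>\<^sup>+ u. ennreal (ball_volume_density (Suc n) u) * g u \<partial>lborel)"
proof -
  have "(\<integral>\<^sup>+ t. ennreal pi * indicator {0..} t * (\<integral>\<^sup>+ s. ennreal (ball_volume_density n s) * g (t + s) \<partial>lborel) \<partial>lborel)
      = (\<integral>\<^sup>+ t. (\<integral>\<^sup>+ s. ennreal pi * indicator {0..} t * ennreal (ball_volume_density n s) * g (t + s) \<partial>lborel) \<partial>lborel)"
    by (intro nn_integral_cong) (simp add: nn_integral_cmult[symmetric] mult.assoc)
  also have "\<dots> = (\<integral>\<^sup>+ s. (\<integral>\<^sup>+ t. ennreal pi * indicator {0..} t * ennreal (ball_volume_density n s) * g (t + s) \<partial>lborel) \<partial>lborel)"
    by (rule lborel_pair.Fubini'[symmetric]) measurable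
  also have "\<dots> = (\<integral>\<^sup>+ s. (\<integral>\<^sup>+ u. ennreal pi * indicator {s..} u * ennreal (ball_volume_density n s) * g u \<partial>lborel) \<partial>lborel)"
  proof (rule nn_integral_cong)
    fix s :: real
    have "(\<integral>\<^sup>+ u. ennreal pi * indicator {s..} u * ennreal (ball_volume_density n s) * g u \<partial>lborel)
       = (\<integral>\<^sup>+ t. ennreal pi * indicator {s..} (s + 1 * t) * ennreal (ball_volume_density n s) * g (s + 1 * t) \<partial>lborel)"
      using nn_integral_real_affine[of "\<lambda>u. ennreal pi * indicator {s..} u * ennreal (ball_volume_density n s) * g u" 1 s] by simp
    also have "\<dots> = (\<integral>\<^sup>+ t. ennreal pi * indicator {0..} t * ennreal (ball_volume_density n s) * g (t + s) \<partial>lborel)"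
      by (intro nn_integral_cong) (auto simp: indicator_def add.commute)
    finally show "(\<integral>\<^sup>+ t. ennreal pi * indicator {0..} t * ennreal (ball_volume_density n s) * g (t + s) \<partial>lborel)
       = (\<integral>\<^sup>+ u. ennreal pi * indicator {s..} u * ennreal (ball_volume_density n s) * g u \<partial>lborel)" by simp
  qed
  also have "\<dots> = (\<integral>\<^sup>+ u. (\<integral>\<^sup>+ s. ennreal pi * indicator {s..} u * ennreal (ball_volume_density n s) * g u \<partial>lborel) \<partial>lborel)"
    by (rule lborel_pair.Fubini') measurable
  also have "\<dots> = (\<integral>\<^sup>+ u. ennreal (ball_volume_density (Suc n) u) * g u \<partial>lborel)"
  proof (rule nn_integral_cong)
    fix u :: real
    have "(\<integral>\<^sup>+ s. ennreal pi * indicator {s..} u * ennreal (ball_volume_density n s) * g u \<partial>lborel)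
        = (\<integral>\<^sup>+ s. (ennreal pi * g u) * (ennreal (ball_volume_density n s) * indicator {..u} s) \<partial>lborel)"
      by (intro nn_integral_cong) (auto simp: indicator_def mult_ac)
    also have "\<dots> = (ennreal pi * g u) * (\<integral>\<^sup>+ s. ennreal (ball_volume_density n s) * indicator {..u} s \<partial>lborel)"
      by (rule nn_integral_cmult) simp
    also have "\<dots> = (ennreal pi * g u) * ennreal (if 0 \<le> u then pi ^ n * u ^ n / fact n else 0)"
      by (simp add: nn_integral_ball_volume_density_atMost[OF n1])
    also have "\<dots> = ennreal (ball_volume_density (Suc n) u) * g u"
    proof -
      have r: "ball_volume_density (Suc n) u = pi * (if 0 \<le> u then pi ^ n * u ^ n / fact n else 0)"
        by (simp add: ball_volume_density_def)
      have "ennreal (ball_volume_density (Suc n) u) = ennreal pi * ennreal (if 0 \<le> u then pi ^ n * u ^ n / fact n else 0)"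
        unfolding r by (rule ennreal_mult) auto
      then show ?thesis by (simp add: mult_ac)
    qed
    finally show "(\<integral>\<^sup>+ s. ennreal pi * indicator {s..} u * ennreal (ball_volume_density n s) * g u \<partial>lborel) = ennreal (ball_volume_density (Suc n) u) * g u" .
  qed
  finally show ?thesis .
qed

lemma nn_integral_PiM_sum_cmod_sq:
  fixes J :: "'i set"
  assumes "finite J" "J \<noteq> {}" and g[measurable]: "g \<in> borel_measurable (borel :: real measure)"
  shows "(\<integral>\<^sup>+ v. g (\<Sum>j\<in>J. (cmod (v j))\<^sup>2) \<partial>PiM J (\<lambda>_. lborel::complex measure))
       = (\<integral>\<^sup>+ s. ennreal (ball_volume_density (card J) s) * g s \<partial>lborel)"
  using assms
proof (induction J arbitrary: g rule: finite_ne_induct)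
  case (singleton j)
  interpret L: product_sigma_finite "\<lambda>_::'i. lborel::complex measure" by (rule product_sigma_finite_lborel)
  have "(\<integral>\<^sup>+ v. g (\<Sum>j\<in>{j}. (cmod (v j))\<^sup>2) \<partial>PiM {j} (\<lambda>_. lborel::complex measure))
      = (\<integral>\<^sup>+ y. g ((cmod y)\<^sup>2) \<partial>lborel)"
    using L.product_nn_integral_singleton[of "\<lambda>y. g ((cmod y)\<^sup>2)" j] singleton by simp
  also have "\<dots> = (\<integral>\<^sup>+ s. ennreal pi * indicator {0..} s * g s \<partial>lborel)"
    by (rule nn_integral_cmod_sq) (use singleton in simp)
  also have "\<dots> = (\<integral>\<^sup>+ s. ennreal (ball_volume_density (card {j}) s) * g s \<partial>lborel)"
    by (intro nn_integral_cong) (auto simp: ball_volume_density_def indicator_def)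
  finally show ?case .
next
  case (insert j J)
  interpret L: product_sigma_finite "\<lambda>_::'i. lborel::complex measure" by (rule product_sigma_finite_lborel)
  note g[measurable] = insert.prems
  have n1: "card J \<ge> 1" using insert by (simp add: Suc_le_eq card_gt_0_iff)
  have "(\<integral>\<^sup>+ v. g (\<Sum>i\<in>insert j J. (cmod (v i))\<^sup>2) \<partial>PiM (insert j J) (\<lambda>_. lborel::complex measure))
      = (\<integral>\<^sup>+ y. (\<integral>\<^sup>+ x. g (\<Sum>i\<in>insert j J. (cmod ((x(j := y)) i))\<^sup>2) \<partial>PiM J (\<lambda>_. lborel)) \<partial>lborel)"
    by (rule L.product_nn_integral_insert_rev) (use insert in auto)
  also have "\<dots> = (\<integral>\<^sup>+ y. (\<integral>\<^sup>+ s. ennreal (ball_volume_density (card J) s) * g ((cmod y)\<^sup>2 + s) \<partial>lborel) \<partial>lborel)"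
  proof (rule nn_integral_cong)
    fix y :: complex
    show "(\<integral>\<^sup>+ x. g (\<Sum>i\<in>insert j J. (cmod ((x(j := y)) i))\<^sup>2) \<partial>PiM J (\<lambda>_. lborel))
        = (\<integral>\<^sup>+ s. ennreal (ball_volume_density (card J) s) * g ((cmod y)\<^sup>2 + s) \<partial>lborel)"
      unfolding sum_cmod_sq_fun_upd[OF insert.hyps(3) insert.hyps(1)] by (rule insert.IH) simp
  qed
  also have "\<dots> = (\<integral>\<^sup>+ t. ennreal pi * indicator {0..} t * (\<integral>\<^sup>+ s. ennreal (ball_volume_density (card J) s) * g (t + s) \<partial>lborel) \<partial>lborel)"
    by (rule nn_integral_cmod_sq) simp
  also have "\<dots> = (\<integral>\<^sup>+ u. ennreal (ball_volume_density (card (insert j J)) u) * g u \<partial>lborel)"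
    using nn_integral_ball_volume_density_Suc[OF n1 g] insert.hyps by simp
  finally show ?case .
qed

lemma nn_integral_PiM_scaled_sum_cmod_sq:
  fixes J :: "'i set"
  assumes J: "finite J" "J \<noteq> {}" and c: "c > 0" and g[measurable]: "g \<in> borel_measurable (borel :: real measure)"
  shows "(\<integral>\<^sup>+ v. g (c * (\<Sum>j\<in>J. (cmod (v j))\<^sup>2)) \<partial>PiM J (\<lambda>_. lborel::complex measure))
       = (\<integral>\<^sup>+ s. ennreal (ball_volume_density (card J) s / c ^ card J) * g s \<partial>lborel)"
proof -
  define n where "n = card J"
  have n: "n \<ge> 1" using J by (simp add: n_def Suc_le_eq card_gt_0_iff)
  have "(\<integral>\<^sup>+ v. g (c * (\<Sum>j\<in>J. (cmod (v j))\<^sup>2)) \<partial>PiM J (\<lambda>_. lborel::complex measure))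
      = (\<integral>\<^sup>+ s. ennreal (ball_volume_density n s) * g (c * s) \<partial>lborel)"
    unfolding n_def by (rule nn_integral_PiM_sum_cmod_sq[OF J, of "\<lambda>s. g (c * s)"]) simp
  also have "\<dots> = \<bar>1 / c\<bar> * (\<integral>\<^sup>+ u. ennreal (ball_volume_density n (0 + (1/c) * u)) * g (c * (0 + (1/c) * u)) \<partial>lborel)"
    using c by (intro nn_integral_real_affine) auto
  also have "\<dots> = ennreal (1 / c) * (\<integral>\<^sup>+ u. ennreal (ball_volume_density n u / c ^ (n - 1)) * g u \<partial>lborel)"
  proof -
    have "ball_volume_density n (u / c) = ball_volume_density n u / c ^ (n - 1)" for u
      using c by (auto simp: ball_volume_density_def power_divide zero_le_divide_iff)
    then show ?thesis using c by simp
  qed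
  also have "\<dots> = (\<integral>\<^sup>+ u. ennreal (ball_volume_density n u / c ^ n) * g u \<partial>lborel)"
  proof -
    have "ennreal (1 / c) * (ennreal (ball_volume_density n u / c ^ (n - 1)) * g u) = ennreal (ball_volume_density n u / c ^ n) * g u" for u
    proof -
      have "1 / c * (ball_volume_density n u / c ^ (n - 1)) = ball_volume_density n u / c ^ n"
        using n c by (cases n) (auto simp: field_simps)
      then have "ennreal (1 / c) * ennreal (ball_volume_density n u / c ^ (n - 1)) = ennreal (ball_volume_density n u / c ^ n)"
        using c by (simp add: ennreal_mult[symmetric] ball_volume_density_nonneg)
      then show ?thesis by (simp add: mult.assoc[symmetric])
    qed
    then show ?thesis by (simp add: nn_integral_cmult[symmetric])
  qed
  finally show ?thesis by (simp add: n_def)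
qed

lemma sum_Times_singleton:
  "(\<Sum>j\<in>{k}\<times>L. f j) = (\<Sum>l\<in>L. f (k, l))"
proof -
  have "{k} \<times> L = (\<lambda>l. (k, l)) ` L" by auto
  moreover have "inj_on (\<lambda>l. (k, l)) L" by (auto intro: inj_onI)
  ultimately show ?thesis by (simp add: sum.reindex)
qed

lemma measurable_fun_upd_const:
  assumes "r \<in> space (M k)"
  shows "(\<lambda>s. s(k := r)) \<in> PiM KK M \<rightarrow>\<^sub>M PiM (insert k KK) M"
proof -
  have "(\<lambda>s. (s, r)) \<in> PiM KK M \<rightarrow>\<^sub>M PiM KK M \<Otimes>\<^sub>M M k"
    using assms by (intro measurable_Pair measurable_ident_sets measurable_const) auto
  from measurable_compose[OF this measurable_add_dim] show ?thesis by simp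
qed

lemma block_sums_merge:
  assumes "k \<notin> KK"
  shows "(\<lambda>k'\<in>insert k KK. c k' * (\<Sum>l\<in>L. (cmod (merge (KK \<times> L) ({k} \<times> L) (x, y) (k',l)))\<^sup>2))
    = (\<lambda>k'\<in>KK. c k' * (\<Sum>l\<in>L. (cmod (x (k',l)))\<^sup>2))(k := c k * (\<Sum>j\<in>{k}\<times>L. (cmod (y j))\<^sup>2))"
  using assms by (auto simp: merge_def sum_Times_singleton intro!: sum.cong)

lemma nn_integral_PiM_insert_weighted:
  fixes \<rho> :: "'k \<Rightarrow> real \<Rightarrow> ennreal"
  assumes "finite KK" "k \<notin> KK" and [measurable]: "\<And>k'. \<rho> k' \<in> borel_measurable borel"
    and G[measurable]: "G \<in> borel_measurable (PiM (insert k KK) (\<lambda>_. lborel::real measure))"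
  shows "(\<integral>\<^sup>+ r. \<rho> k r * (\<integral>\<^sup>+ s. G (s(k := r)) * (\<Prod>k'\<in>KK. \<rho> k' (s k')) \<partial>PiM KK (\<lambda>_. lborel)) \<partial>lborel)
    = (\<integral>\<^sup>+ s. G s * (\<Prod>k'\<in>insert k KK. \<rho> k' (s k')) \<partial>PiM (insert k KK) (\<lambda>_. lborel))"
proof -
  interpret LR: product_sigma_finite "\<lambda>_::'k. lborel::real measure" by (rule product_sigma_finite_lborel)
  have "(\<integral>\<^sup>+ r. \<rho> k r * (\<integral>\<^sup>+ s. G (s(k := r)) * (\<Prod>k'\<in>KK. \<rho> k' (s k')) \<partial>PiM KK (\<lambda>_. lborel)) \<partial>lborel)
      = (\<integral>\<^sup>+ r. (\<integral>\<^sup>+ s. G (s(k := r)) * (\<Prod>k'\<in>insert k KK. \<rho> k' ((s(k := r)) k')) \<partial>PiM KK (\<lambda>_. lborel)) \<partial>lborel)"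
  proof (rule nn_integral_cong)
    fix r :: real
    have "(\<Prod>k'\<in>insert k KK. \<rho> k' ((s(k := r)) k')) = \<rho> k r * (\<Prod>k'\<in>KK. \<rho> k' (s k'))" for s :: "'k \<Rightarrow> real"
    proof -
      have "(\<Prod>k'\<in>KK. \<rho> k' ((s(k := r)) k')) = (\<Prod>k'\<in>KK. \<rho> k' (s k'))"
        using assms(1,2) by (intro prod.cong) auto
      then show ?thesis using assms(1,2) by simp
    qed
    then show "\<rho> k r * (\<integral>\<^sup>+ s. G (s(k := r)) * (\<Prod>k'\<in>KK. \<rho> k' (s k')) \<partial>PiM KK (\<lambda>_. lborel))
       = (\<integral>\<^sup>+ s. G (s(k := r)) * (\<Prod>k'\<in>insert k KK. \<rho> k' ((s(k := r)) k')) \<partial>PiM KK (\<lambda>_. lborel))"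
      by (subst nn_integral_cmult[symmetric]) (measurable, simp add: mult_ac)
  qed
  also have "\<dots> = (\<integral>\<^sup>+ s. G s * (\<Prod>k'\<in>insert k KK. \<rho> k' (s k')) \<partial>PiM (insert k KK) (\<lambda>_. lborel))"
    by (rule LR.product_nn_integral_insert_rev[symmetric]) (use assms in auto)
  finally show ?thesis .
qed

lemma nn_integral_PiM_block_sums:
  fixes KK :: "'k set" and L :: "'l set" and c :: "'k \<Rightarrow> real"
  assumes "finite KK" "finite L" "L \<noteq> {}" "\<And>k. k \<in> KK \<Longrightarrow> c k > 0"
    and "G \<in> borel_measurable (PiM KK (\<lambda>_. lborel::real measure))"
  shows "(\<integral>\<^sup>+ v. G (\<lambda>k\<in>KK. c k * (\<Sum>l\<in>L. (cmod (v (k,l)))\<^sup>2)) \<partial>PiM (KK \<times> L) (\<lambda>_. lborel::complex measure))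
    = (\<integral>\<^sup>+ s. G s * (\<Prod>k\<in>KK. ennreal (ball_volume_density (card L) (s k) / c k ^ card L)) \<partial>PiM KK (\<lambda>_. lborel))"
  using assms
proof (induction KK arbitrary: G rule: finite_induct)
  case empty
  show ?case by (simp add: PiM_empty nn_integral_count_space_finite)
next
  case (insert k KK)
  interpret LC: product_sigma_finite "\<lambda>_::'k\<times>'l. lborel::complex measure" by (rule product_sigma_finite_lborel)
  interpret LR: product_sigma_finite "\<lambda>_::'k. lborel::real measure" by (rule product_sigma_finite_lborel)
  note G[measurable] = insert.prems(4)
  have L: "finite L" "L \<noteq> {}" using insert.prems by auto
  have ck: "c k > 0" using insert.prems by auto
  define m where "m = card L"
  define S where "S x = (\<lambda>k'\<in>KK. c k' * (\<Sum>l\<in>L. (cmod (x (k',l)))\<^sup>2))" for x :: "'k \<times> 'l \<Rightarrow> complex"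
  define \<rho> where "\<rho> k' r = ennreal (ball_volume_density m r / c k' ^ m)" for k' r
  have S_meas[measurable]: "S \<in> PiM (KK \<times> L) (\<lambda>_. lborel::complex measure) \<rightarrow>\<^sub>M PiM KK (\<lambda>_. lborel::real measure)"
    unfolding S_def by (rule measurable_restrict) (use L in \<open>auto intro!: borel_measurable_sum\<close>)
  have [measurable]: "\<rho> k' \<in> borel_measurable borel" for k' unfolding \<rho>_def by measurable
  have disj: "(KK \<times> L) \<inter> ({k} \<times> L) = {}" using insert.hyps by auto
  have un: "insert k KK \<times> L = (KK \<times> L) \<union> ({k} \<times> L)" by auto
  define F where "F v = G (\<lambda>k'\<in>insert k KK. c k' * (\<Sum>l\<in>L. (cmod (v (k',l)))\<^sup>2))" for v :: "'k \<times> 'l \<Rightarrow> complex"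
  have [measurable]: "F \<in> borel_measurable (PiM (insert k KK \<times> L) (\<lambda>_. lborel::complex measure))"
    unfolding F_def
    by (rule measurable_compose[OF measurable_restrict G]) (use L in \<open>auto intro!: borel_measurable_sum\<close>)
  have "(\<integral>\<^sup>+ v. F v \<partial>PiM (insert k KK \<times> L) (\<lambda>_. lborel::complex measure))
     = (\<integral>\<^sup>+ x. (\<integral>\<^sup>+ y. F (merge (KK \<times> L) ({k} \<times> L) (x, y)) \<partial>PiM ({k} \<times> L) (\<lambda>_. lborel)) \<partial>PiM (KK \<times> L) (\<lambda>_. lborel))"
    unfolding un by (rule LC.product_nn_integral_fold[OF disj]) (use insert L in \<open>auto simp: un[symmetric]\<close>)
  also have "\<dots> = (\<integral>\<^sup>+ x. (\<integral>\<^sup>+ r. \<rho> k r * G ((S x)(k := r)) \<partial>lborel) \<partial>PiM (KK \<times> L) (\<lambda>_. lborel))"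
  proof (rule nn_integral_cong)
    fix x assume x: "x \<in> space (PiM (KK \<times> L) (\<lambda>_. lborel::complex measure))"
    have eq: "F (merge (KK \<times> L) ({k} \<times> L) (x, y)) = G ((S x)(k := c k * (\<Sum>j\<in>{k}\<times>L. (cmod (y j))\<^sup>2)))" for y
      unfolding F_def S_def block_sums_merge[OF insert.hyps(2)] ..
    have "(\<integral>\<^sup>+ y. F (merge (KK \<times> L) ({k} \<times> L) (x, y)) \<partial>PiM ({k} \<times> L) (\<lambda>_. lborel))
        = (\<integral>\<^sup>+ y. G ((S x)(k := c k * (\<Sum>j\<in>{k}\<times>L. (cmod (y j))\<^sup>2))) \<partial>PiM ({k} \<times> L) (\<lambda>_. lborel))"
      by (simp add: eq)
    also have "\<dots> = (\<integral>\<^sup>+ r. ennreal (ball_volume_density (card ({k}\<times>L)) r / c k ^ card ({k}\<times>L)) * G ((S x)(k := r)) \<partial>lborel)"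
    proof (rule nn_integral_PiM_scaled_sum_cmod_sq[OF _ _ ck])
      show "finite ({k} \<times> L)" "{k} \<times> L \<noteq> {}" using L by auto
      have "S x \<in> space (PiM KK (\<lambda>_. lborel::real measure))"
        by (rule measurable_space[OF S_meas x])
      then show "(\<lambda>r. G ((S x)(k := r))) \<in> borel_measurable borel"
        using measurable_comp[OF measurable_component_update[of "S x" KK "\<lambda>_. lborel::real measure" k] G] insert.hyps
        by (simp add: comp_def)
    qed
    also have "card ({k}\<times>L) = m" by (simp add: m_def card_cartesian_product)
    finally show "(\<integral>\<^sup>+ y. F (merge (KK \<times> L) ({k} \<times> L) (x, y)) \<partial>PiM ({k} \<times> L) (\<lambda>_. lborel))
        = (\<integral>\<^sup>+ r. \<rho> k r * G ((S x)(k := r)) \<partial>lborel)" unfolding \<rho>_def .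
  qed
  also have "\<dots> = (\<integral>\<^sup>+ r. (\<integral>\<^sup>+ x. \<rho> k r * G ((S x)(k := r)) \<partial>PiM (KK \<times> L) (\<lambda>_. lborel)) \<partial>lborel)"
  proof -
    interpret PS: pair_sigma_finite "PiM (KK \<times> L) (\<lambda>_. lborel::complex measure)" "lborel::real measure"
      by (intro pair_sigma_finite.intro LC.sigma_finite sigma_finite_lborel) (use insert L in auto)
    show ?thesis
      by (rule PS.Fubini'[symmetric]) measurable
  qed
  also have "\<dots> = (\<integral>\<^sup>+ r. \<rho> k r * (\<integral>\<^sup>+ s. G (s(k := r)) * (\<Prod>k'\<in>KK. \<rho> k' (s k')) \<partial>PiM KK (\<lambda>_. lborel)) \<partial>lborel)"
  proof (rule nn_integral_cong)
    fix r :: real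
    have Gr: "(\<lambda>s. G (s(k := r))) \<in> borel_measurable (PiM KK (\<lambda>_. lborel::real measure))"
      using measurable_compose[OF measurable_fun_upd_const[of r "\<lambda>_. lborel::real measure" k KK] G] by simp
    have "(\<integral>\<^sup>+ x. \<rho> k r * G ((S x)(k := r)) \<partial>PiM (KK \<times> L) (\<lambda>_. lborel)) = \<rho> k r * (\<integral>\<^sup>+ x. G ((S x)(k := r)) \<partial>PiM (KK \<times> L) (\<lambda>_. lborel))"
      by (rule nn_integral_cmult) measurable
    also have "(\<integral>\<^sup>+ x. G ((S x)(k := r)) \<partial>PiM (KK \<times> L) (\<lambda>_. lborel)) = (\<integral>\<^sup>+ s. G (s(k := r)) * (\<Prod>k'\<in>KK. \<rho> k' (s k')) \<partial>PiM KK (\<lambda>_. lborel))"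
      unfolding S_def \<rho>_def m_def
      by (rule insert.IH[OF L(1) L(2) _ Gr]) (use insert.prems in auto)
    finally show "(\<integral>\<^sup>+ x. \<rho> k r * G ((S x)(k := r)) \<partial>PiM (KK \<times> L) (\<lambda>_. lborel)) = \<rho> k r * (\<integral>\<^sup>+ s. G (s(k := r)) * (\<Prod>k'\<in>KK. \<rho> k' (s k')) \<partial>PiM KK (\<lambda>_. lborel))" .
  qed
  also have "\<dots> = (\<integral>\<^sup>+ s. G s * (\<Prod>k'\<in>insert k KK. \<rho> k' (s k')) \<partial>PiM (insert k KK) (\<lambda>_. lborel))"
    by (rule nn_integral_PiM_insert_weighted) (use insert in auto)
  finally show ?case unfolding F_def \<rho>_def m_def .
qed

section \<open>The integral \<open>g\<^sub>0\<close>\<close>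

lemma prod_insert_fun_upd:
  assumes "finite KK" "k0 \<notin> KK"
  shows "(\<Prod>k\<in>insert k0 KK. f ((t(k0 := y)) k)) = f y * (\<Prod>k\<in>KK. f (t k))"
proof -
  have "(\<Prod>k\<in>KK. f ((t(k0 := y)) k)) = (\<Prod>k\<in>KK. f (t k))"
    using assms by (intro prod.cong) auto
  then show ?thesis using assms by simp
qed

lemma prod_one_plus_level_set_null:
  fixes KK :: "'k set" and x :: real
  assumes KK: "finite KK" "KK \<noteq> {}"
  shows "{t \<in> space (PiM KK (\<lambda>_. lborel::real measure)). (\<forall>k\<in>KK. 0 \<le> t k) \<and> (\<Prod>k\<in>KK. 1 + t k) = x}
     \<in> null_sets (PiM KK (\<lambda>_. lborel))"
proof -
  interpret LR: product_sigma_finite "\<lambda>_::'k. lborel::real measure" by (rule product_sigma_finite_lborel)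
  obtain k0 KK' where KK': "KK = insert k0 KK'" "k0 \<notin> KK'"
    using KK by (metis equals0I mk_disjoint_insert)
  have fin': "finite KK'" using KK KK' by auto
  define E where "E = {t \<in> space (PiM KK (\<lambda>_. lborel::real measure)). (\<forall>k\<in>KK. 0 \<le> t k) \<and> (\<Prod>k\<in>KK. 1 + t k) = x}"
  have E_sets[measurable]: "E \<in> sets (PiM KK (\<lambda>_. lborel::real measure))"
    unfolding E_def using KK by measurable
  have "emeasure (PiM KK (\<lambda>_. lborel::real measure)) E = (\<integral>\<^sup>+ t. indicator E t \<partial>PiM KK (\<lambda>_. lborel))"
    by simp
  also have "\<dots> = (\<integral>\<^sup>+ t. (\<integral>\<^sup>+ y. indicator E (t(k0 := y)) \<partial>lborel) \<partial>PiM KK' (\<lambda>_. lborel))"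
    unfolding KK'(1) by (rule LR.product_nn_integral_insert) (use fin' KK' E_sets in auto)
  also have "\<dots> = (\<integral>\<^sup>+ t. (0::ennreal) \<partial>PiM KK' (\<lambda>_. lborel::real measure))"
  proof (rule nn_integral_cong)
    fix t :: "'k \<Rightarrow> real"
    define P where "P = (\<Prod>k\<in>KK'. 1 + t k)"
    have "(\<integral>\<^sup>+ y. indicator E (t(k0 := y)) \<partial>lborel) \<le> (\<integral>\<^sup>+ y. indicator {x / P - 1} y \<partial>lborel)"
    proof (rule nn_integral_mono)
      fix y :: real
      show "indicator E (t(k0 := y)) \<le> (indicator {x / P - 1} y :: ennreal)"
      proof (cases "t(k0 := y) \<in> E")
        case True
        then have nn: "\<forall>k\<in>KK'. 0 \<le> t k" and eq: "(\<Prod>k\<in>KK. 1 + (t(k0 := y)) k) = x"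
          using KK' by (auto simp: E_def split: if_splits)
        have P1: "P \<ge> 1" unfolding P_def using nn by (intro prod_ge_1) auto
        have "(1 + y) * P = x" using eq unfolding KK'(1) P_def
          by (subst (asm) prod_insert_fun_upd[OF fin' KK'(2), where f="\<lambda>s. 1 + s"]) simp
        then have "y = x / P - 1" using P1 by (auto simp: field_simps)
        then show ?thesis using True by simp
      qed simp
    qed
    also have "\<dots> = 0" by simp
    finally show "(\<integral>\<^sup>+ y. indicator E (t(k0 := y)) \<partial>lborel) = 0" by simp
  qed
  finally show ?thesis using E_sets unfolding E_def[symmetric] by (simp add: null_sets_def)
qed

definition prod_le_region :: "'k set \<Rightarrow> real \<Rightarrow> ('k \<Rightarrow> real) set" where
  "prod_le_region KK x = {t. (\<forall>k\<in>KK. 0 \<le> t k) \<and> (\<Prod>k\<in>KK. 1 + t k) \<le> x}"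

definition prod_less_region :: "'k set \<Rightarrow> real \<Rightarrow> ('k \<Rightarrow> real) set" where
  "prod_less_region KK x = {t. (\<forall>k\<in>KK. 0 \<le> t k) \<and> (\<Prod>k\<in>KK. 1 + t k) < x}"

lemma one_plus_le_prod:
  fixes t :: "'k \<Rightarrow> real"
  assumes "finite KK" "k \<in> KK" "\<forall>j\<in>KK. 0 \<le> t j"
  shows "1 + t k \<le> (\<Prod>j\<in>KK. 1 + t j)"
proof -
  have "(\<Prod>j\<in>KK. 1 + t j) = (1 + t k) * (\<Prod>j\<in>KK - {k}. 1 + t j)"
    using assms by (simp add: prod.remove)
  moreover have "1 \<le> (\<Prod>j\<in>KK - {k}. 1 + t j)" by (rule prod_ge_1) (use assms in auto)
  moreover have "0 \<le> 1 + t k" using assms by auto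
  ultimately show ?thesis by (metis mult_left_mono mult.right_neutral)
qed

lemma nn_integral_prod_less_region_eq:
  fixes KK :: "'k set"
  assumes KK: "finite KK" "KK \<noteq> {}"
  shows "(\<integral>\<^sup>+ t. indicator (prod_less_region KK x) t * ennreal (\<Prod>k\<in>KK. t k ^ (m - 1)) \<partial>PiM KK (\<lambda>_. lborel::real measure))
       = (\<integral>\<^sup>+ t. indicator (prod_le_region KK x) t * ennreal (\<Prod>k\<in>KK. t k ^ (m - 1)) \<partial>PiM KK (\<lambda>_. lborel::real measure))"
proof (rule nn_integral_cong_AE)
  have "AE t in PiM KK (\<lambda>_. lborel::real measure).
      t \<notin> {t \<in> space (PiM KK (\<lambda>_. lborel::real measure)). (\<forall>k\<in>KK. 0 \<le> t k) \<and> (\<Prod>k\<in>KK. 1 + t k) = x}"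
    by (rule AE_not_in[OF prod_one_plus_level_set_null[OF KK]])
  then show "AE t in PiM KK (\<lambda>_. lborel::real measure). indicator (prod_less_region KK x) t * ennreal (\<Prod>k\<in>KK. t k ^ (m - 1))
      = indicator (prod_le_region KK x) t * ennreal (\<Prod>k\<in>KK. t k ^ (m - 1))"
    using AE_space by eventually_elim (auto simp: prod_less_region_def prod_le_region_def indicator_def)
qed

lemma nn_integral_prod_le_region_finite:
  fixes KK :: "'k set"
  assumes KK: "finite KK" and x: "x \<ge> 1"
  shows "(\<integral>\<^sup>+ t. indicator (prod_le_region KK x) t * ennreal (\<Prod>k\<in>KK. t k ^ (m - 1)) \<partial>PiM KK (\<lambda>_. lborel::real measure)) < \<infinity>"
proof -
  interpret LR: product_sigma_finite "\<lambda>_::'k. lborel::real measure" by (rule product_sigma_finite_lborel)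
  have "(\<integral>\<^sup>+ t. indicator (prod_le_region KK x) t * ennreal (\<Prod>k\<in>KK. t k ^ (m - 1)) \<partial>PiM KK (\<lambda>_. lborel::real measure))
     \<le> (\<integral>\<^sup>+ t. (\<Prod>k\<in>KK. indicator {0..x-1} (t k) * ennreal ((x - 1) ^ (m - 1))) \<partial>PiM KK (\<lambda>_. lborel::real measure))"
  proof (rule nn_integral_mono)
    fix t :: "'k \<Rightarrow> real"
    show "indicator (prod_le_region KK x) t * ennreal (\<Prod>k\<in>KK. t k ^ (m - 1)) \<le> (\<Prod>k\<in>KK. indicator {0..x-1} (t k) * ennreal ((x - 1) ^ (m - 1)))"
    proof (cases "t \<in> prod_le_region KK x")
      case True
      then have nn: "\<forall>k\<in>KK. 0 \<le> t k" and le: "(\<Prod>k\<in>KK. 1 + t k) \<le> x" by (auto simp: prod_le_region_def)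
      have bnd: "t k \<le> x - 1" if "k \<in> KK" for k
        using one_plus_le_prod[OF KK that nn] le by linarith
      have "ennreal (\<Prod>k\<in>KK. t k ^ (m - 1)) = (\<Prod>k\<in>KK. ennreal (t k ^ (m - 1)))"
        using nn by (simp add: prod_ennreal)
      also have "\<dots> \<le> (\<Prod>k\<in>KK. ennreal ((x - 1) ^ (m - 1)))"
        by (rule prod_mono_ennreal) (use nn bnd in \<open>auto intro!: ennreal_leI power_mono\<close>)
      also have "\<dots> = (\<Prod>k\<in>KK. indicator {0..x-1} (t k) * ennreal ((x - 1) ^ (m - 1)))"
        using nn bnd by (intro prod.cong) auto
      finally show ?thesis using True by simp
    qed simp
  qed
  also have "\<dots> = (\<Prod>k\<in>KK. (\<integral>\<^sup>+ s. indicator {0..x-1} s * ennreal ((x - 1) ^ (m - 1)) \<partial>lborel))"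
    using LR.product_nn_integral_prod[OF KK, of "\<lambda>k s. indicator {0..x-1} s * ennreal ((x - 1) ^ (m - 1))"] by simp
  also have "\<dots> < \<infinity>"
    using x by (subst nn_integral_multc) (auto simp: ennreal_mult_less_top power_less_top_ennreal emeasure_lborel_Icc_eq)
  finally show ?thesis .
qed

lemma nn_integral_power_atLeastAtMost:
  assumes m: "m \<ge> 1" and \<delta>: "\<delta> \<ge> 0"
  shows "(\<integral>\<^sup>+ s. indicator {0..\<delta>} s * ennreal (s ^ (m - 1)) \<partial>lborel) = ennreal (\<delta> ^ m / m)"
proof -
  have "(\<integral>\<^sup>+ s. indicator {0..\<delta>} s * ennreal (s ^ (m - 1)) \<partial>lborel) = (\<integral>\<^sup>+ s\<in>{0..\<delta>}. ennreal (s ^ (m - 1)) \<partial>lborel)"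
    by (simp add: mult.commute)
  also have "\<dots> = ennreal (\<delta> ^ m / m - 0 ^ m / m)"
  proof (rule nn_integral_FTC_Icc)
    fix s :: real assume "s \<in> {0..\<delta>}"
    have "((\<lambda>s. s ^ m / m) has_real_derivative (real m * s ^ (m - 1)) / m) (at s)"
      by (auto intro!: derivative_eq_intros)
    then show "((\<lambda>s. s ^ m / m) has_real_derivative s ^ (m - 1)) (at s)"
      using m by simp
  qed (use \<delta> in auto)
  finally show ?thesis using m by (simp add: zero_power)
qed

lemma nn_integral_prod_le_region_pos:
  fixes KK :: "'k set"
  assumes KK: "finite KK" "KK \<noteq> {}" and x: "x > 1" and m: "m \<ge> 1"
  shows "(\<integral>\<^sup>+ t. indicator (prod_le_region KK x) t * ennreal (\<Prod>k\<in>KK. t k ^ (m - 1)) \<partial>PiM KK (\<lambda>_. lborel::real measure)) > 0"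
proof -
  interpret LR: product_sigma_finite "\<lambda>_::'k. lborel::real measure" by (rule product_sigma_finite_lborel)
  define n where "n = card KK"
  have n: "n > 0" using KK by (simp add: n_def card_gt_0_iff)
  define \<delta> where "\<delta> = x powr (1 / real n) - 1"
  have \<delta>: "\<delta> > 0" using x n by (simp add: \<delta>_def)
  have \<delta>n: "(1 + \<delta>) ^ n = x"
    using x n by (simp add: \<delta>_def powr_realpow[symmetric] powr_powr)
  have int1: "(\<integral>\<^sup>+ s. indicator {0..\<delta>} s * ennreal (s ^ (m - 1)) \<partial>lborel) = ennreal (\<delta> ^ m / m)"
    using m \<delta> by (intro nn_integral_power_atLeastAtMost) auto
  have "0 < (\<Prod>k\<in>KK. (\<integral>\<^sup>+ s. indicator {0..\<delta>} s * ennreal (s ^ (m - 1)) \<partial>lborel))"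
    unfolding int1 using \<delta> m by (subst prod_ennreal) (auto intro!: prod_pos)
  also have "\<dots> = (\<integral>\<^sup>+ t. (\<Prod>k\<in>KK. indicator {0..\<delta>} (t k) * ennreal (t k ^ (m - 1))) \<partial>PiM KK (\<lambda>_. lborel::real measure))"
    using LR.product_nn_integral_prod[OF KK(1), of "\<lambda>k s. indicator {0..\<delta>} s * ennreal (s ^ (m - 1))"] by simp
  also have "\<dots> \<le> (\<integral>\<^sup>+ t. indicator (prod_le_region KK x) t * ennreal (\<Prod>k\<in>KK. t k ^ (m - 1)) \<partial>PiM KK (\<lambda>_. lborel::real measure))"
  proof (rule nn_integral_mono)
    fix t :: "'k \<Rightarrow> real"
    show "(\<Prod>k\<in>KK. indicator {0..\<delta>} (t k) * ennreal (t k ^ (m - 1))) \<le> indicator (prod_le_region KK x) t * ennreal (\<Prod>k\<in>KK. t k ^ (m - 1))"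
    proof (cases "\<forall>k\<in>KK. t k \<in> {0..\<delta>}")
      case True
      have "(\<Prod>k\<in>KK. 1 + t k) \<le> (\<Prod>k\<in>KK. 1 + \<delta>)"
        using True by (intro prod_mono) auto
      also have "\<dots> = x" using \<delta>n by (simp add: n_def)
      finally have "t \<in> prod_le_region KK x" using True by (auto simp: prod_le_region_def)
      moreover have "(\<Prod>k\<in>KK. indicator {0..\<delta>} (t k) * ennreal (t k ^ (m - 1))) = ennreal (\<Prod>k\<in>KK. t k ^ (m - 1))"
        using True by (simp add: prod_ennreal)
      ultimately show ?thesis by simp
    next
      case False
      then obtain k where k: "k \<in> KK" "t k \<notin> {0..\<delta>}" by auto
      have z: "(\<Prod>k\<in>KK. indicator {0..\<delta>} (t k) * ennreal (t k ^ (m - 1))) = (0::ennreal)"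
        using KK k by (intro prod_zero) (auto intro!: bexI[of _ k])
      then show ?thesis by (simp only: z zero_le)
    qed
  qed
  finally show ?thesis .
qed

lemma indicator_prod_region_measurable[measurable]:
  fixes KK :: "'k set"
  assumes "finite KK"
  shows "indicator (prod_le_region KK x) \<in> borel_measurable (PiM KK (\<lambda>_. lborel::real measure))"
    "indicator (prod_less_region KK x) \<in> borel_measurable (PiM KK (\<lambda>_. lborel::real measure))"
  using assms unfolding prod_le_region_def prod_less_region_def by measurable

lemma g0_eq_nn_integral:
  assumes x: "x \<ge> 1"
  shows "ennreal (g0 K m x) = (\<integral>\<^sup>+ t. indicator (prod_le_region {1..K} x) t * ennreal (\<Prod>k\<in>{1..K}. t k ^ (m - 1)) \<partial>PiM {1..K} (\<lambda>_. lborel::real measure))"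
proof -
  let ?M = "PiM {1..K} (\<lambda>_. lborel::real measure)"
  let ?W = "(\<integral>\<^sup>+ t. indicator (prod_le_region {1..K} x) t * ennreal (\<Prod>k\<in>{1..K}. t k ^ (m - 1)) \<partial>?M)"
  have S: "{t. (\<forall>k\<in>{1..K}. 0 \<le> t k) \<and> (\<Prod>k\<in>{1..K}. 1 + t k) \<le> x} = prod_le_region {1..K} x"
    by (simp add: prod_le_region_def)
  have "g0 K m x = (\<integral>t. indicator (prod_le_region {1..K} x) t *\<^sub>R (\<Prod>k\<in>{1..K}. t k ^ (m - 1)) \<partial>?M)"
    unfolding g0_def S set_lebesgue_integral_def ..
  also have "\<dots> = enn2real (\<integral>\<^sup>+ t. ennreal (indicator (prod_le_region {1..K} x) t *\<^sub>R (\<Prod>k\<in>{1..K}. t k ^ (m - 1))) \<partial>?M)"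
    by (rule integral_eq_nn_integral)
       (measurable, auto simp: prod_le_region_def indicator_def intro!: AE_I2 prod_nonneg)
  also have "(\<integral>\<^sup>+ t. ennreal (indicator (prod_le_region {1..K} x) t *\<^sub>R (\<Prod>k\<in>{1..K}. t k ^ (m - 1))) \<partial>?M) = ?W"
    by (intro nn_integral_cong) (auto simp: indicator_def)
  finally have "g0 K m x = enn2real ?W" .
  moreover have "?W < \<infinity>" by (rule nn_integral_prod_le_region_finite[OF _ x]) simp
  ultimately show ?thesis by simp
qed

lemma g0_pos:
  assumes "K \<ge> 1" "m \<ge> 1" "x > 1"
  shows "g0 K m x > 0"
proof -
  have "ennreal (g0 K m x) > 0"
    unfolding g0_eq_nn_integral[OF less_imp_le[OF \<open>x > 1\<close>]]
    using assms by (intro nn_integral_prod_le_region_pos) auto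
  then show ?thesis by simp
qed

lemma indicator_prod_less_times_ball_volume_density:
  fixes c s :: "'k \<Rightarrow> real"
  assumes KK: "finite KK" "KK \<noteq> {}" and c: "\<And>k. k \<in> KK \<Longrightarrow> c k > 0"
  shows "indicator {t. (\<Prod>k\<in>KK. 1 + t k) < x} s * (\<Prod>k\<in>KK. ennreal (ball_volume_density n (s k) / c k ^ n))
    = (\<Prod>k\<in>KK. ennreal (pi ^ n / (fact (n - 1) * c k ^ n))) * (indicator (prod_less_region KK x) s * ennreal (\<Prod>k\<in>KK. s k ^ (n - 1)))"
proof (cases "\<forall>k\<in>KK. 0 \<le> s k")
  case True
  have "(\<Prod>k\<in>KK. ennreal (ball_volume_density n (s k) / c k ^ n))
      = (\<Prod>k\<in>KK. ennreal (pi ^ n / (fact (n - 1) * c k ^ n)) * ennreal (s k ^ (n - 1)))"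
  proof (rule prod.cong[OF refl])
    fix k assume k: "k \<in> KK"
    have "ball_volume_density n (s k) / c k ^ n = pi ^ n / (fact (n - 1) * c k ^ n) * s k ^ (n - 1)"
      using True k c[OF k] by (simp add: ball_volume_density_def field_simps)
    then show "ennreal (ball_volume_density n (s k) / c k ^ n) = ennreal (pi ^ n / (fact (n - 1) * c k ^ n)) * ennreal (s k ^ (n - 1))"
      using True k c[OF k] by (simp add: ennreal_mult[symmetric])
  qed
  also have "\<dots> = (\<Prod>k\<in>KK. ennreal (pi ^ n / (fact (n - 1) * c k ^ n))) * ennreal (\<Prod>k\<in>KK. s k ^ (n - 1))"
    using True by (simp add: prod.distrib prod_ennreal)
  finally show ?thesis
    using True by (simp add: prod_less_region_def indicator_def mult_ac)
next
  case False
  then obtain k where k: "k \<in> KK" "s k < 0" by (auto simp: not_le)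
  have z: "(\<Prod>k\<in>KK. ennreal (ball_volume_density n (s k) / c k ^ n)) = 0"
    using KK k by (intro prod_zero) (auto simp: ball_volume_density_def intro!: bexI[of _ k])
  have "indicator (prod_less_region KK x) s = (0::ennreal)" using k by (auto simp: prod_less_region_def indicator_def dest!: bspec[of _ _ k])
  then show ?thesis by (simp add: z)
qed

lemma nn_integral_PiM_indicator_prod_block_sums:
  fixes KK :: "'k set" and L :: "'l set" and c :: "'k \<Rightarrow> real"
  assumes KK: "finite KK" "KK \<noteq> {}" and L: "finite L" "L \<noteq> {}" and c: "\<And>k. k \<in> KK \<Longrightarrow> c k > 0"
  shows "(\<integral>\<^sup>+ v. indicator {v. (\<Prod>k\<in>KK. 1 + c k * (\<Sum>l\<in>L. (cmod (v (k,l)))\<^sup>2)) < x} v \<partial>PiM (KK \<times> L) (\<lambda>_. lborel::complex measure))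
    = (\<Prod>k\<in>KK. ennreal (pi ^ card L / (fact (card L - 1) * c k ^ card L))) *
      (\<integral>\<^sup>+ t. indicator (prod_less_region KK x) t * ennreal (\<Prod>k\<in>KK. t k ^ (card L - 1)) \<partial>PiM KK (\<lambda>_. lborel::real measure))"
proof -
  define n where "n = card L"
  define G where "G = (indicator {s. (\<Prod>k\<in>KK. 1 + s k) < x} :: (('k \<Rightarrow> real) \<Rightarrow> ennreal))"
  have [measurable]: "G \<in> borel_measurable (PiM KK (\<lambda>_. lborel::real measure))"
    unfolding G_def using KK by measurable
  have "(\<integral>\<^sup>+ v. indicator {v. (\<Prod>k\<in>KK. 1 + c k * (\<Sum>l\<in>L. (cmod (v (k,l)))\<^sup>2)) < x} v \<partial>PiM (KK \<times> L) (\<lambda>_. lborel::complex measure))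
      = (\<integral>\<^sup>+ v. G (\<lambda>k\<in>KK. c k * (\<Sum>l\<in>L. (cmod (v (k,l)))\<^sup>2)) \<partial>PiM (KK \<times> L) (\<lambda>_. lborel::complex measure))"
  proof (rule nn_integral_cong)
    fix v :: "'k \<times> 'l \<Rightarrow> complex"
    have "(\<Prod>k\<in>KK. 1 + (\<lambda>k\<in>KK. c k * (\<Sum>l\<in>L. (cmod (v (k,l)))\<^sup>2)) k) = (\<Prod>k\<in>KK. 1 + c k * (\<Sum>l\<in>L. (cmod (v (k,l)))\<^sup>2))"
      by (intro prod.cong) auto
    then show "indicator {v. (\<Prod>k\<in>KK. 1 + c k * (\<Sum>l\<in>L. (cmod (v (k,l)))\<^sup>2)) < x} v = G (\<lambda>k\<in>KK. c k * (\<Sum>l\<in>L. (cmod (v (k,l)))\<^sup>2))"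
      unfolding G_def by (simp add: indicator_def)
  qed
  also have "\<dots> = (\<integral>\<^sup>+ s. G s * (\<Prod>k\<in>KK. ennreal (ball_volume_density (card L) (s k) / c k ^ card L)) \<partial>PiM KK (\<lambda>_. lborel))"
    by (rule nn_integral_PiM_block_sums[OF KK(1) L c]) measurable
  also have "\<dots> = (\<integral>\<^sup>+ s. (\<Prod>k\<in>KK. ennreal (pi ^ n / (fact (n - 1) * c k ^ n))) * (indicator (prod_less_region KK x) s * ennreal (\<Prod>k\<in>KK. s k ^ (n - 1))) \<partial>PiM KK (\<lambda>_. lborel))"
    by (rule nn_integral_cong) (use KK c in \<open>simp add: G_def n_def indicator_prod_less_times_ball_volume_density\<close>)
  also have "\<dots> = (\<Prod>k\<in>KK. ennreal (pi ^ n / (fact (n - 1) * c k ^ n))) *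
      (\<integral>\<^sup>+ t. indicator (prod_less_region KK x) t * ennreal (\<Prod>k\<in>KK. t k ^ (n - 1)) \<partial>PiM KK (\<lambda>_. lborel::real measure))"
    by (rule nn_integral_cmult) (use KK in measurable)
  finally show ?thesis by (simp add: n_def)
qed

section \<open>Conditioning on the common component\<close>

lemma abs_h_restrict:
  assumes "k \<in> {1..K}"
  shows "abs_h m \<sigma>2 lam (restrict z ({0..K} \<times> {1..m})) k = abs_h m \<sigma>2 lam z k"
  unfolding abs_h_def using assms by (auto intro!: sum.cong arg_cong[where f=sqrt])



lemma p_out_eq_measure_PiM:
  fixes M :: "'a measure" and Z :: "nat \<times> nat \<Rightarrow> 'a \<Rightarrow> complex"
  assumes M: "prob_space M" and ind: "prob_space.indep_vars M (\<lambda>_. borel) Z ({0..K} \<times> {1..m})"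
    and dist: "\<And>i. i \<in> {0..K} \<times> {1..m} \<Longrightarrow> distr M borel (Z i) = std_cscg"
    and m: "m \<ge> 1"
  shows "p_out M Z K m \<sigma>2 lam \<theta> R \<gamma> = measure (PiM ({0..K}\<times>{1..m}) (\<lambda>_. std_cscg))
     {z \<in> space (PiM ({0..K}\<times>{1..m}) (\<lambda>_. std_cscg)). (\<Prod>k\<in>{1..K}. 1 + \<gamma> * \<theta> k * (abs_h m \<sigma>2 lam z k)\<^sup>2) < 2 powr R}"
proof -
  interpret prob_space M by (rule M)
  define I where "I = {0..K} \<times> {1..m}"
  have In: "I \<noteq> {}" using m by (auto simp: I_def)
  have rv: "random_variable borel (Z i)" if "i \<in> I" for i
    using ind that unfolding indep_vars_def I_def by auto
  define F where "F \<omega> = (\<lambda>i\<in>I. Z i \<omega>)" for \<omega>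
  have D: "distr M (PiM I (\<lambda>_. borel)) F = PiM I (\<lambda>_. std_cscg)"
  proof -
    have "distr M (PiM I (\<lambda>_. borel)) F = PiM I (\<lambda>i. distr M borel (Z i))"
      using indep_vars_iff_distr_eq_PiM'[OF In rv] ind unfolding F_def I_def by simp
    also have "\<dots> = PiM I (\<lambda>_. std_cscg)"
      using dist unfolding I_def by (intro PiM_cong) auto
    finally show ?thesis .
  qed
  have Fm[measurable]: "F \<in> M \<rightarrow>\<^sub>M PiM I (\<lambda>_. borel)"
    unfolding F_def by (rule measurable_restrict) (use rv in auto)
  define P where "P z \<longleftrightarrow> (\<Prod>k\<in>{1..K}. 1 + \<gamma> * \<theta> k * (abs_h m \<sigma>2 lam z k)\<^sup>2) < 2 powr R" for z
  have [measurable]: "Measurable.pred (PiM I (\<lambda>_. borel::complex measure)) P"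
    unfolding P_def abs_h_def I_def by measurable
  have PF: "P (\<lambda>i. Z i \<omega>) = P (F \<omega>)" for \<omega>
    unfolding P_def F_def I_def
    by (intro arg_cong[where f="\<lambda>t. t < 2 powr R"] prod.cong refl) (metis abs_h_restrict)
  have "p_out M Z K m \<sigma>2 lam \<theta> R \<gamma> = measure M {\<omega> \<in> space M. P (F \<omega>)}"
    unfolding p_out_def P_def[symmetric] PF ..
  also have "{\<omega> \<in> space M. P (F \<omega>)} = F -` {z \<in> space (PiM I (\<lambda>_. borel)). P z} \<inter> space M"
    using measurable_space[OF Fm] by auto
  also have "measure M \<dots> = measure (distr M (PiM I (\<lambda>_. borel)) F) {z \<in> space (PiM I (\<lambda>_. borel)). P z}"
    by (rule measure_distr[symmetric]) measurable
  also have "\<dots> = measure (PiM I (\<lambda>_. std_cscg)) {z \<in> space (PiM I (\<lambda>_. std_cscg)). P z}"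
  proof -
    have "space (PiM I (\<lambda>_. borel::complex measure)) = space (PiM I (\<lambda>_. std_cscg))"
      by (simp add: space_PiM std_cscg_eq_density)
    then show ?thesis by (simp add: D)
  qed
  finally show ?thesis unfolding P_def I_def .
qed

text \<open>The coordinates \<open>(k, l)\<close> with \<open>k \<ge> 1\<close> are substituted by
  \<open>inner_shift lam w (k, l) + inner_scale \<gamma> lam (k, l) *\<^sub>R v (k, l)\<close>, where \<open>w\<close> holds the
  common coordinates \<open>(0, l)\<close>; \<open>slice_integrand\<close> is the resulting integrand in \<open>v\<close>.\<close>

definition indep_weight :: "(nat \<Rightarrow> real) \<Rightarrow> nat \<Rightarrow> real" where
  "indep_weight lam k = sqrt (1 - (lam k)\<^sup>2)"

definition inner_scale :: "real \<Rightarrow> (nat \<Rightarrow> real) \<Rightarrow> nat \<times> nat \<Rightarrow> real" where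
  "inner_scale \<gamma> lam i = 1 / (sqrt \<gamma> * indep_weight lam (fst i))"

definition inner_shift :: "(nat \<Rightarrow> real) \<Rightarrow> (nat \<times> nat \<Rightarrow> complex) \<Rightarrow> nat \<times> nat \<Rightarrow> complex" where
  "inner_shift lam w i = - complex_of_real (lam (fst i) / indep_weight lam (fst i)) * w (0, snd i)"

definition normalized_region :: "nat \<Rightarrow> nat \<Rightarrow> (nat \<Rightarrow> real) \<Rightarrow> real \<Rightarrow> (nat \<times> nat \<Rightarrow> complex) set" where
  "normalized_region K m c x = {v. (\<Prod>k\<in>{1..K}. 1 + c k * (\<Sum>l\<in>{1..m}. (cmod (v (k,l)))\<^sup>2)) < x}"

definition outage_slice :: "real \<Rightarrow> (nat \<Rightarrow> real) \<Rightarrow> (nat \<Rightarrow> real) \<Rightarrow> nat \<Rightarrow> nat \<Rightarrow> (nat \<times> nat \<Rightarrow> complex) \<Rightarrow> real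
    \<Rightarrow> (nat \<times> nat \<Rightarrow> complex) set" where
  "outage_slice \<gamma> c lam K m w x = {y. (\<Prod>k\<in>{1..K}. 1 + \<gamma> * c k *
     (\<Sum>l\<in>{1..m}. (cmod (complex_of_real (indep_weight lam k) * y (k,l) + complex_of_real (lam k) * w (0,l)))\<^sup>2)) < x}"

definition slice_integrand :: "real \<Rightarrow> (nat \<Rightarrow> real) \<Rightarrow> nat \<Rightarrow> nat \<Rightarrow> (nat \<Rightarrow> real) \<Rightarrow> real \<Rightarrow> (nat \<times> nat \<Rightarrow> complex) \<Rightarrow> (nat \<times> nat \<Rightarrow> complex) \<Rightarrow> ennreal" where
  "slice_integrand \<gamma> lam K m c x w v = indicator (normalized_region K m c x) v * (\<Prod>i\<in>{1..K}\<times>{1..m}. ennreal (cscg_density (inner_shift lam w i + inner_scale \<gamma> lam i *\<^sub>R v i)))"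

lemma indep_weight_pos: "0 \<le> lam k \<Longrightarrow> lam k < 1 \<Longrightarrow> indep_weight lam k > 0"
  unfolding indep_weight_def by (simp add: power_less_one_iff abs_square_less_1)

lemma indep_weight_sq:
  assumes "\<bar>lam k\<bar> \<le> 1"
  shows "(indep_weight lam k)\<^sup>2 = 1 - (lam k)\<^sup>2"
  using assms unfolding indep_weight_def by (simp add: abs_square_le_1 power_le_one)

lemma normalized_region_measurable[measurable]:
  "indicator (normalized_region K m c x) \<in> borel_measurable (PiM ({1..K}\<times>{1..m}) (\<lambda>_. lborel::complex measure))"
  unfolding normalized_region_def by measurable

lemma outage_slice_measurable[measurable]:
  "indicator (outage_slice \<gamma> c lam K m w x) \<in> borel_measurable (PiM ({1..K}\<times>{1..m}) (\<lambda>_. lborel::complex measure))"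
  unfolding outage_slice_def by measurable

lemma outage_slice_affine_iff:
  assumes g: "\<gamma> > 0" and a: "\<And>k. k \<in> {1..K} \<Longrightarrow> indep_weight lam k > 0"
  shows "(\<lambda>i\<in>{1..K}\<times>{1..m}. inner_shift lam w i + inner_scale \<gamma> lam i *\<^sub>R v i) \<in> outage_slice \<gamma> c lam K m w x \<longleftrightarrow> v \<in> normalized_region K m c x"
proof -
  have eq: "\<gamma> * c k * (\<Sum>l\<in>{1..m}. (cmod (complex_of_real (indep_weight lam k) * (inner_shift lam w (k,l) + inner_scale \<gamma> lam (k,l) *\<^sub>R v (k,l)) + complex_of_real (lam k) * w (0,l)))\<^sup>2)
      = c k * (\<Sum>l\<in>{1..m}. (cmod (v (k,l)))\<^sup>2)" if k: "k \<in> {1..K}" for k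
  proof -
    have ak: "indep_weight lam k \<noteq> 0" using a[OF k] by simp
    have "complex_of_real (indep_weight lam k) * (inner_shift lam w (k,l) + inner_scale \<gamma> lam (k,l) *\<^sub>R v (k,l)) + complex_of_real (lam k) * w (0,l)
        = complex_of_real (1 / sqrt \<gamma>) * v (k,l)" for l
      using ak g by (simp add: inner_shift_def inner_scale_def scaleR_conv_of_real field_simps of_real_divide)
    then have "(\<Sum>l\<in>{1..m}. (cmod (complex_of_real (indep_weight lam k) * (inner_shift lam w (k,l) + inner_scale \<gamma> lam (k,l) *\<^sub>R v (k,l)) + complex_of_real (lam k) * w (0,l)))\<^sup>2)
        = (\<Sum>l\<in>{1..m}. (cmod (v (k,l)))\<^sup>2 / \<gamma>)"
      using g by (intro sum.cong refl) (simp add: norm_divide power_divide)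
    then show ?thesis using g by (simp add: sum_divide_distrib[symmetric])
  qed
  have "(\<Prod>k\<in>{1..K}. 1 + \<gamma> * c k * (\<Sum>l\<in>{1..m}. (cmod (complex_of_real (indep_weight lam k) * (\<lambda>i\<in>{1..K}\<times>{1..m}. inner_shift lam w i + inner_scale \<gamma> lam i *\<^sub>R v i) (k,l) + complex_of_real (lam k) * w (0,l)))\<^sup>2))
      = (\<Prod>k\<in>{1..K}. 1 + c k * (\<Sum>l\<in>{1..m}. (cmod (v (k,l)))\<^sup>2))"
  proof (rule prod.cong[OF refl])
    fix k assume k: "k \<in> {1..K}"
    have "(\<Sum>l\<in>{1..m}. (cmod (complex_of_real (indep_weight lam k) * (\<lambda>i\<in>{1..K}\<times>{1..m}. inner_shift lam w i + inner_scale \<gamma> lam i *\<^sub>R v i) (k,l) + complex_of_real (lam k) * w (0,l)))\<^sup>2)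
       = (\<Sum>l\<in>{1..m}. (cmod (complex_of_real (indep_weight lam k) * (inner_shift lam w (k,l) + inner_scale \<gamma> lam (k,l) *\<^sub>R v (k,l)) + complex_of_real (lam k) * w (0,l)))\<^sup>2)"
      using k by (intro sum.cong refl) auto
    then show "1 + \<gamma> * c k * (\<Sum>l\<in>{1..m}. (cmod (complex_of_real (indep_weight lam k) * (\<lambda>i\<in>{1..K}\<times>{1..m}. inner_shift lam w i + inner_scale \<gamma> lam i *\<^sub>R v i) (k,l) + complex_of_real (lam k) * w (0,l)))\<^sup>2)
       = 1 + c k * (\<Sum>l\<in>{1..m}. (cmod (v (k,l)))\<^sup>2)"
      using eq[OF k] by simp
  qed
  then show ?thesis unfolding outage_slice_def normalized_region_def by simp
qed

lemma nn_integral_outage_slice: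
  assumes g: "\<gamma> > 0" and a: "\<And>k. k \<in> {1..K} \<Longrightarrow> indep_weight lam k > 0"
  shows "(\<integral>\<^sup>+ y. indicator (outage_slice \<gamma> c lam K m w x) y \<partial>PiM ({1..K}\<times>{1..m}) (\<lambda>_. std_cscg))
    = ennreal (\<Prod>i\<in>{1..K}\<times>{1..m}. (inner_scale \<gamma> lam i)\<^sup>2) * (\<integral>\<^sup>+ v. slice_integrand \<gamma> lam K m c x w v \<partial>PiM ({1..K}\<times>{1..m}) (\<lambda>_. lborel))"
proof -
  define I1 where "I1 = {1..K}\<times>{1..m}"
  define F where "F y = (\<Prod>i\<in>I1. ennreal (cscg_density (y i))) * indicator (outage_slice \<gamma> c lam K m w x) y" for y :: "nat\<times>nat \<Rightarrow> complex"
  have fin: "finite I1" by (simp add: I1_def)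
  have indA[measurable]: "(indicator (outage_slice \<gamma> c lam K m w x) :: _ \<Rightarrow> ennreal) \<in> borel_measurable (PiM I1 (\<lambda>_. lborel::complex measure))"
    unfolding I1_def by (rule outage_slice_measurable)
  have Fm[measurable]: "F \<in> borel_measurable (PiM I1 (\<lambda>_. lborel::complex measure))"
    unfolding F_def by measurable
  have alnz: "inner_scale \<gamma> lam j \<noteq> 0" if "j \<in> I1" for j
  proof -
    have "indep_weight lam (fst j) > 0" using that a by (auto simp: I1_def)
    then show ?thesis using g by (simp add: inner_scale_def)
  qed
  have "(\<integral>\<^sup>+ y. indicator (outage_slice \<gamma> c lam K m w x) y \<partial>PiM I1 (\<lambda>_. std_cscg)) = (\<integral>\<^sup>+ y. F y \<partial>PiM I1 (\<lambda>_. lborel))"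
    unfolding PiM_std_cscg_eq_density[OF fin] F_def using indA by (subst nn_integral_density) auto
  also have "\<dots> = (\<Prod>i\<in>I1. ennreal ((inner_scale \<gamma> lam i)\<^sup>2)) * (\<integral>\<^sup>+ v. F (\<lambda>i\<in>I1. inner_shift lam w i + inner_scale \<gamma> lam i *\<^sub>R v i) \<partial>PiM I1 (\<lambda>_. lborel))"
    by (rule nn_integral_PiM_lborel_affine[OF fin alnz Fm])
  also have "(\<integral>\<^sup>+ v. F (\<lambda>i\<in>I1. inner_shift lam w i + inner_scale \<gamma> lam i *\<^sub>R v i) \<partial>PiM I1 (\<lambda>_. lborel)) = (\<integral>\<^sup>+ v. slice_integrand \<gamma> lam K m c x w v \<partial>PiM I1 (\<lambda>_. lborel))"
  proof (rule nn_integral_cong)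
    fix v :: "nat\<times>nat \<Rightarrow> complex"
    have "(\<Prod>i\<in>I1. ennreal (cscg_density ((\<lambda>i\<in>I1. inner_shift lam w i + inner_scale \<gamma> lam i *\<^sub>R v i) i))) = (\<Prod>i\<in>I1. ennreal (cscg_density (inner_shift lam w i + inner_scale \<gamma> lam i *\<^sub>R v i)))"
      by (intro prod.cong) auto
    moreover have "indicator (outage_slice \<gamma> c lam K m w x) (\<lambda>i\<in>I1. inner_shift lam w i + inner_scale \<gamma> lam i *\<^sub>R v i) = (indicator (normalized_region K m c x) v :: ennreal)"
      using outage_slice_affine_iff[OF g a, where m=m and w=w and v=v and c=c and x=x] unfolding I1_def by (simp add: indicator_def)
    ultimately show "F (\<lambda>i\<in>I1. inner_shift lam w i + inner_scale \<gamma> lam i *\<^sub>R v i) = slice_integrand \<gamma> lam K m c x w v"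
      unfolding F_def slice_integrand_def I1_def by (simp add: mult.commute)
  qed
  also have "(\<Prod>i\<in>I1. ennreal ((inner_scale \<gamma> lam i)\<^sup>2)) = ennreal (\<Prod>i\<in>I1. (inner_scale \<gamma> lam i)\<^sup>2)"
    by (simp add: prod_ennreal)
  finally show ?thesis unfolding I1_def .
qed

lemma slice_integrand_measurable_lborel:
  "(\<lambda>(w, v). slice_integrand \<gamma> lam K m c x w v) \<in> borel_measurable (PiM ({0}\<times>{1..m}) (\<lambda>_. lborel::complex measure) \<Otimes>\<^sub>M PiM ({1..K}\<times>{1..m}) (\<lambda>_. lborel::complex measure))"
proof -
  let ?P = "PiM ({0}\<times>{1..m}) (\<lambda>_. lborel::complex measure) \<Otimes>\<^sub>M PiM ({1..K}\<times>{1..m}) (\<lambda>_. lborel::complex measure)"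
  have indicator_meas: "(\<lambda>p. indicator (normalized_region K m c x) (snd p) :: ennreal) \<in> borel_measurable ?P"
    by measurable
  have density_meas: "(\<lambda>p. ennreal (cscg_density (inner_shift lam (fst p) i + inner_scale \<gamma> lam i *\<^sub>R snd p i))) \<in> borel_measurable ?P"
    if i: "i \<in> {1..K}\<times>{1..m}" for i
  proof -
    have i0: "(0, snd i) \<in> {0}\<times>{1..m}" using i by auto
    have [measurable]: "(\<lambda>p. fst p (0, snd i)) \<in> borel_measurable ?P"
      by (rule measurable_compose[OF measurable_fst]) (use measurable_component_singleton[OF i0, of "\<lambda>_. lborel::complex measure"] in simp)
    have [measurable]: "(\<lambda>p. snd p i) \<in> borel_measurable ?P"
      by (rule measurable_compose[OF measurable_snd]) (use measurable_component_singleton[OF i, of "\<lambda>_. lborel::complex measure"] in simp)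
    show ?thesis unfolding inner_shift_def by measurable
  qed
  have "(\<lambda>p. indicator (normalized_region K m c x) (snd p) * (\<Prod>i\<in>{1..K}\<times>{1..m}. ennreal (cscg_density (inner_shift lam (fst p) i + inner_scale \<gamma> lam i *\<^sub>R snd p i)))) \<in> borel_measurable ?P"
    by (intro borel_measurable_times_ennreal indicator_meas borel_measurable_prod_ennreal density_meas)
  then show ?thesis by (simp add: slice_integrand_def case_prod_beta')
qed

lemma slice_integrand_measurable[measurable]:
  "(\<lambda>(w, v). slice_integrand \<gamma> lam K m c x w v) \<in> borel_measurable (PiM ({0}\<times>{1..m}) (\<lambda>_. std_cscg) \<Otimes>\<^sub>M PiM ({1..K}\<times>{1..m}) (\<lambda>_. lborel::complex measure))"
  by (subst measurable_cong_sets[OF sets_pair_measure_cong[OF sets_PiM_std_cscg refl] refl]) (rule slice_integrand_measurable_lborel)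

lemma abs_h_merge_sq:
  assumes k: "k \<in> {1..K}" and "\<sigma>2 k \<ge> 0"
  shows "(abs_h m \<sigma>2 lam (merge ({0}\<times>{1..m}) ({1..K}\<times>{1..m}) (w, y)) k)\<^sup>2
    = \<sigma>2 k / real m * (\<Sum>l\<in>{1..m}. (cmod (complex_of_real (indep_weight lam k) * y (k,l) + complex_of_real (lam k) * w (0,l)))\<^sup>2)"
proof -
  have "(\<Sum>l = 1..m. (cmod (complex_of_real (sqrt (1 - (lam k)\<^sup>2)) * merge ({0}\<times>{1..m}) ({1..K}\<times>{1..m}) (w, y) (k, l)
        + complex_of_real (lam k) * merge ({0}\<times>{1..m}) ({1..K}\<times>{1..m}) (w, y) (0, l)))\<^sup>2)
      = (\<Sum>l\<in>{1..m}. (cmod (complex_of_real (indep_weight lam k) * y (k,l) + complex_of_real (lam k) * w (0,l)))\<^sup>2)"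
    using k by (intro sum.cong refl) (auto simp: merge_def indep_weight_def)
  moreover have "0 \<le> \<sigma>2 k / real m" using assms(2) by simp
  ultimately show ?thesis
    unfolding abs_h_def by (simp add: power_mult_distrib sum_nonneg)
qed

lemma merge_in_outage_slice_iff:
  assumes s: "\<And>k. k \<in> {1..K} \<Longrightarrow> \<sigma>2 k > 0"
  shows "(\<Prod>k\<in>{1..K}. 1 + \<gamma> * \<theta> k * (abs_h m \<sigma>2 lam (merge ({0}\<times>{1..m}) ({1..K}\<times>{1..m}) (w, y)) k)\<^sup>2) < x
    \<longleftrightarrow> y \<in> outage_slice \<gamma> (\<lambda>k. \<theta> k * \<sigma>2 k / real m) lam K m w x"
proof -
  have "(abs_h m \<sigma>2 lam (merge ({0}\<times>{1..m}) ({1..K}\<times>{1..m}) (w, y)) k)\<^sup>2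
      = \<sigma>2 k / real m * (\<Sum>l\<in>{1..m}. (cmod (complex_of_real (indep_weight lam k) * y (k,l) + complex_of_real (lam k) * w (0,l)))\<^sup>2)"
    if k: "k \<in> {1..K}" for k
    using k s[OF k] by (intro abs_h_merge_sq) auto
  then show ?thesis
    unfolding outage_slice_def by (simp add: mult.assoc)
qed

definition outage_integral :: "real \<Rightarrow> (nat \<Rightarrow> real) \<Rightarrow> nat \<Rightarrow> nat \<Rightarrow> (nat \<Rightarrow> real) \<Rightarrow> real \<Rightarrow> ennreal" where
  "outage_integral \<gamma> lam K m c x =
     (\<integral>\<^sup>+ w. (\<integral>\<^sup>+ v. slice_integrand \<gamma> lam K m c x w v \<partial>PiM ({1..K}\<times>{1..m}) (\<lambda>_. lborel))
        \<partial>PiM ({0}\<times>{1..m}) (\<lambda>_. std_cscg))"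

lemma emeasure_outage_eq_outage_integral:
  fixes \<gamma> x :: real and \<theta> \<sigma>2 lam :: "nat \<Rightarrow> real"
  assumes g: "\<gamma> > 0" and a: "\<And>k. k \<in> {1..K} \<Longrightarrow> indep_weight lam k > 0"
    and s: "\<And>k. k \<in> {1..K} \<Longrightarrow> \<sigma>2 k > 0" and m: "m \<ge> 1"
  defines "c \<equiv> \<lambda>k. \<theta> k * \<sigma>2 k / real m"
  shows "emeasure (PiM ({0..K}\<times>{1..m}) (\<lambda>_. std_cscg))
     {z \<in> space (PiM ({0..K}\<times>{1..m}) (\<lambda>_. std_cscg)). (\<Prod>k\<in>{1..K}. 1 + \<gamma> * \<theta> k * (abs_h m \<sigma>2 lam z k)\<^sup>2) < x}
   = ennreal (\<Prod>i\<in>{1..K}\<times>{1..m}. (inner_scale \<gamma> lam i)\<^sup>2) *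
     outage_integral \<gamma> lam K m c x"
proof -
  interpret N: prob_space std_cscg by (rule prob_space_std_cscg)
  interpret PN: product_sigma_finite "\<lambda>_::nat\<times>nat. std_cscg"
    by (simp add: product_sigma_finite_def N.sigma_finite_measure_axioms)
  define I0 where "I0 = {0::nat}\<times>{1..m}"
  define I1 where "I1 = {1..K}\<times>{1..m}"
  have I: "{0..K}\<times>{1..m} = I0 \<union> I1" by (auto simp: I0_def I1_def)
  have disj: "I0 \<inter> I1 = {}" by (auto simp: I0_def I1_def)
  have fin0: "finite I0" and fin1: "finite I1" by (auto simp: I0_def I1_def)
  define P where "P z \<longleftrightarrow> (\<Prod>k\<in>{1..K}. 1 + \<gamma> * \<theta> k * (abs_h m \<sigma>2 lam z k)\<^sup>2) < x" for z
  have Pm[measurable]: "Measurable.pred (PiM (I0 \<union> I1) (\<lambda>_. std_cscg)) P"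
  proof -
    have "Measurable.pred (PiM ({0..K}\<times>{1..m}) (\<lambda>_. lborel::complex measure)) P"
      unfolding P_def abs_h_def by measurable
    then show ?thesis unfolding I[symmetric]
      by (subst measurable_cong_sets[OF sets_PiM_std_cscg refl])
  qed
  have "emeasure (PiM (I0 \<union> I1) (\<lambda>_. std_cscg)) {z \<in> space (PiM (I0 \<union> I1) (\<lambda>_. std_cscg)). P z}
      = (\<integral>\<^sup>+ z. indicator {z \<in> space (PiM (I0 \<union> I1) (\<lambda>_. std_cscg)). P z} z \<partial>PiM (I0 \<union> I1) (\<lambda>_. std_cscg))"
    by (rule nn_integral_indicator[symmetric]) measurable
  also have "\<dots> = (\<integral>\<^sup>+ w. (\<integral>\<^sup>+ y. indicator {z \<in> space (PiM (I0 \<union> I1) (\<lambda>_. std_cscg)). P z} (merge I0 I1 (w, y))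
        \<partial>PiM I1 (\<lambda>_. std_cscg)) \<partial>PiM I0 (\<lambda>_. std_cscg))"
    by (rule PN.product_nn_integral_fold[OF disj fin0 fin1]) measurable
  also have "\<dots> = (\<integral>\<^sup>+ w. ennreal (\<Prod>i\<in>I1. (inner_scale \<gamma> lam i)\<^sup>2) * (\<integral>\<^sup>+ v. slice_integrand \<gamma> lam K m c x w v \<partial>PiM I1 (\<lambda>_. lborel)) \<partial>PiM I0 (\<lambda>_. std_cscg))"
  proof (rule nn_integral_cong)
    fix w assume w: "w \<in> space (PiM I0 (\<lambda>_. std_cscg))"
    have "(\<integral>\<^sup>+ y. indicator {z \<in> space (PiM (I0 \<union> I1) (\<lambda>_. std_cscg)). P z} (merge I0 I1 (w, y)) \<partial>PiM I1 (\<lambda>_. std_cscg))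
        = (\<integral>\<^sup>+ y. indicator (outage_slice \<gamma> c lam K m w x) y \<partial>PiM I1 (\<lambda>_. std_cscg))"
    proof (rule nn_integral_cong)
      fix y assume y: "y \<in> space (PiM I1 (\<lambda>_. std_cscg))"
      have sp: "merge I0 I1 (w, y) \<in> space (PiM (I0 \<union> I1) (\<lambda>_. std_cscg))"
        using w y by (auto simp: space_PiM PiE_iff std_cscg_eq_density)
      have "P (merge I0 I1 (w, y)) \<longleftrightarrow> y \<in> outage_slice \<gamma> c lam K m w x"
        unfolding P_def c_def I0_def I1_def by (rule merge_in_outage_slice_iff[OF s])
      then show "indicator {z \<in> space (PiM (I0 \<union> I1) (\<lambda>_. std_cscg)). P z} (merge I0 I1 (w, y)) = (indicator (outage_slice \<gamma> c lam K m w x) y :: ennreal)"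
        using sp by (simp add: indicator_def)
    qed
    also have "\<dots> = ennreal (\<Prod>i\<in>I1. (inner_scale \<gamma> lam i)\<^sup>2) * (\<integral>\<^sup>+ v. slice_integrand \<gamma> lam K m c x w v \<partial>PiM I1 (\<lambda>_. lborel))"
      unfolding I1_def by (rule nn_integral_outage_slice[OF g a])
    finally show "(\<integral>\<^sup>+ y. indicator {z \<in> space (PiM (I0 \<union> I1) (\<lambda>_. std_cscg)). P z} (merge I0 I1 (w, y)) \<partial>PiM I1 (\<lambda>_. std_cscg))
        = ennreal (\<Prod>i\<in>I1. (inner_scale \<gamma> lam i)\<^sup>2) * (\<integral>\<^sup>+ v. slice_integrand \<gamma> lam K m c x w v \<partial>PiM I1 (\<lambda>_. lborel))" .
  qed
  also have "\<dots> = ennreal (\<Prod>i\<in>I1. (inner_scale \<gamma> lam i)\<^sup>2) * (\<integral>\<^sup>+ w. (\<integral>\<^sup>+ v. slice_integrand \<gamma> lam K m c x w v \<partial>PiM I1 (\<lambda>_. lborel)) \<partial>PiM I0 (\<lambda>_. std_cscg))"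
  proof (rule nn_integral_cmult)
    interpret L1: sigma_finite_measure "PiM I1 (\<lambda>_. lborel::complex measure)"
      by (rule product_sigma_finite.sigma_finite[OF product_sigma_finite_lborel]) (simp add: I1_def)
    show "(\<lambda>w. \<integral>\<^sup>+ v. slice_integrand \<gamma> lam K m c x w v \<partial>PiM I1 (\<lambda>_. lborel)) \<in> borel_measurable (PiM I0 (\<lambda>_. std_cscg))"
      by (rule L1.borel_measurable_nn_integral) (use slice_integrand_measurable in \<open>simp add: I0_def I1_def\<close>)
  qed
  finally show ?thesis unfolding I outage_integral_def unfolding P_def I0_def I1_def .
qed

section \<open>The high-SNR limit\<close>

lemma inner_scale_tendsto_0:
  assumes "indep_weight lam (fst i) > 0"
  shows "((\<lambda>\<gamma>. inner_scale \<gamma> lam i) \<longlongrightarrow> 0) at_top"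
proof -
  define a where "a = indep_weight lam (fst i)"
  have "((\<lambda>\<gamma>::real. 1 / (sqrt \<gamma> * a)) \<longlongrightarrow> 0) at_top"
    using assms unfolding a_def[symmetric] by real_asymp
  then show ?thesis unfolding inner_scale_def a_def .
qed

lemma slice_integrand_tendsto:
  assumes a: "\<And>k. k \<in> {1..K} \<Longrightarrow> indep_weight lam k > 0"
  shows "((\<lambda>\<gamma>. slice_integrand \<gamma> lam K m c x w v) \<longlongrightarrow> slice_integrand 0 lam K m c x w v) at_top"
proof -
  have eq: "slice_integrand \<gamma> lam K m c x w v = indicator (normalized_region K m c x) v * ennreal (\<Prod>i\<in>{1..K}\<times>{1..m}. cscg_density (inner_shift lam w i + inner_scale \<gamma> lam i *\<^sub>R v i))" for \<gamma>
    unfolding slice_integrand_def by (simp add: prod_ennreal cscg_density_nonneg)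
  have scale_0: "inner_scale 0 lam i = 0" for i by (simp add: inner_scale_def)
  have "((\<lambda>\<gamma>. \<Prod>i\<in>{1..K}\<times>{1..m}. cscg_density (inner_shift lam w i + inner_scale \<gamma> lam i *\<^sub>R v i)) \<longlongrightarrow> (\<Prod>i\<in>{1..K}\<times>{1..m}. cscg_density (inner_shift lam w i + inner_scale 0 lam i *\<^sub>R v i))) at_top"
  proof (rule tendsto_prod)
    fix i assume i: "i \<in> {1..K}\<times>{1..m}"
    have "((\<lambda>\<gamma>. inner_shift lam w i + inner_scale \<gamma> lam i *\<^sub>R v i) \<longlongrightarrow> inner_shift lam w i + inner_scale 0 lam i *\<^sub>R v i) at_top"
      unfolding scale_0 using inner_scale_tendsto_0[of lam i] a i by (auto intro!: tendsto_eq_intros)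
    moreover have "isCont cscg_density (inner_shift lam w i + inner_scale 0 lam i *\<^sub>R v i)"
      using continuous_on_cscg_density by (simp add: continuous_on_eq_continuous_at)
    ultimately show "((\<lambda>\<gamma>. cscg_density (inner_shift lam w i + inner_scale \<gamma> lam i *\<^sub>R v i)) \<longlongrightarrow> cscg_density (inner_shift lam w i + inner_scale 0 lam i *\<^sub>R v i)) at_top"
      by (rule isCont_tendsto_compose[rotated])
  qed
  then show ?thesis unfolding eq
    by (intro tendsto_mult_ennreal tendsto_const tendsto_ennrealI) (auto simp: indicator_def)
qed

lemma slice_integrand_le: "slice_integrand \<gamma> lam K m c x w v \<le> indicator (normalized_region K m c x) v * ennreal ((1/pi) ^ (K * m))"
proof -
  have "(\<Prod>i\<in>{1..K}\<times>{1..m}. ennreal (cscg_density (inner_shift lam w i + inner_scale \<gamma> lam i *\<^sub>R v i))) \<le> (\<Prod>i\<in>{1..K}\<times>{1..m}. ennreal (1/pi))"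
    by (rule prod_mono_ennreal) (simp add: ennreal_leI cscg_density_le)
  also have "\<dots> = ennreal ((1/pi) ^ (K * m))"
    by (simp add: prod_ennreal card_cartesian_product ennreal_power)
  finally show ?thesis unfolding slice_integrand_def by (intro mult_left_mono) auto
qed

lemma nn_integral_slice_integrand_tendsto:
  assumes a: "\<And>k. k \<in> {1..K} \<Longrightarrow> indep_weight lam k > 0"
    and region_finite: "(\<integral>\<^sup>+ v. indicator (normalized_region K m c x) v \<partial>PiM ({1..K}\<times>{1..m}) (\<lambda>_. lborel::complex measure)) < \<infinity>"
    and w: "w \<in> space (PiM ({0::nat}\<times>{1..m}) (\<lambda>_. std_cscg))"
    and X: "filterlim X at_top sequentially"
  shows "(\<lambda>n. \<integral>\<^sup>+ v. slice_integrand (X n) lam K m c x w v \<partial>PiM ({1..K}\<times>{1..m}) (\<lambda>_. lborel))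
    \<longlonglongrightarrow> (\<integral>\<^sup>+ v. slice_integrand 0 lam K m c x w v \<partial>PiM ({1..K}\<times>{1..m}) (\<lambda>_. lborel))"
proof -
  let ?M1 = "PiM ({1..K}\<times>{1..m}) (\<lambda>_. lborel::complex measure)"
  define C0 where "C0 = ennreal ((1/pi) ^ (K * m))"
  have hm: "(\<lambda>v. slice_integrand \<gamma> lam K m c x w v) \<in> borel_measurable ?M1" for \<gamma>
    using measurable_compose[OF measurable_Pair1'[OF w] slice_integrand_measurable[of \<gamma> lam K m c x]] by simp
  show ?thesis
  proof (rule nn_integral_dominated_convergence[where w="\<lambda>v. indicator (normalized_region K m c x) v * C0"])
    show "(\<lambda>v. slice_integrand (X i) lam K m c x w v) \<in> borel_measurable ?M1" for i by (rule hm)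
    show "(\<lambda>v. slice_integrand 0 lam K m c x w v) \<in> borel_measurable ?M1" by (rule hm)
    show "(\<lambda>v. indicator (normalized_region K m c x) v * C0) \<in> borel_measurable ?M1" by measurable
    show "AE v in ?M1. slice_integrand (X j) lam K m c x w v \<le> indicator (normalized_region K m c x) v * C0" for j
      by (intro AE_I2) (simp add: slice_integrand_le C0_def)
    show "(\<integral>\<^sup>+ v. indicator (normalized_region K m c x) v * C0 \<partial>?M1) < \<infinity>"
      unfolding C0_def nn_integral_multc[OF normalized_region_measurable]
      using region_finite by (simp add: ennreal_mult_less_top)
    show "AE v in ?M1. (\<lambda>n. slice_integrand (X n) lam K m c x w v) \<longlonglongrightarrow> slice_integrand 0 lam K m c x w v"
      by (intro AE_I2 filterlim_compose[OF slice_integrand_tendsto X] a)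
  qed
qed

lemma outage_integral_tendsto_at_0:
  assumes a: "\<And>k. k \<in> {1..K} \<Longrightarrow> indep_weight lam k > 0"
    and region_finite: "(\<integral>\<^sup>+ v. indicator (normalized_region K m c x) v \<partial>PiM ({1..K}\<times>{1..m}) (\<lambda>_. lborel::complex measure)) < \<infinity>"
  shows "((\<lambda>\<gamma>. outage_integral \<gamma> lam K m c x) \<longlongrightarrow> outage_integral 0 lam K m c x) at_top"
  unfolding outage_integral_def
proof (rule tendsto_at_topI_sequentially)
  fix X :: "nat \<Rightarrow> real" assume X: "filterlim X at_top sequentially"
  let ?M0 = "PiM ({0::nat}\<times>{1..m}) (\<lambda>_. std_cscg)"
  let ?M1 = "PiM ({1..K}\<times>{1..m}) (\<lambda>_. lborel::complex measure)"
  define B where "B = (\<integral>\<^sup>+ v. indicator (normalized_region K m c x) v \<partial>?M1) * ennreal ((1/pi) ^ (K * m))"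
  interpret L1: sigma_finite_measure ?M1
    by (rule product_sigma_finite.sigma_finite[OF product_sigma_finite_lborel]) simp
  interpret P0: prob_space ?M0
    by (intro prob_space_PiM prob_space_std_cscg)
  have um: "(\<lambda>w. \<integral>\<^sup>+ v. slice_integrand \<gamma> lam K m c x w v \<partial>?M1) \<in> borel_measurable ?M0" for \<gamma>
    by (rule L1.borel_measurable_nn_integral) (use slice_integrand_measurable in simp)
  have bnd: "(\<integral>\<^sup>+ v. slice_integrand \<gamma> lam K m c x w v \<partial>?M1) \<le> B" for \<gamma> w
  proof -
    have "(\<integral>\<^sup>+ v. slice_integrand \<gamma> lam K m c x w v \<partial>?M1)
        \<le> (\<integral>\<^sup>+ v. indicator (normalized_region K m c x) v * ennreal ((1/pi) ^ (K * m)) \<partial>?M1)"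
      by (intro nn_integral_mono) (simp add: slice_integrand_le)
    also have "\<dots> = B" unfolding B_def by (rule nn_integral_multc) measurable
    finally show ?thesis .
  qed
  have "B < \<infinity>" using region_finite unfolding B_def by (simp add: ennreal_mult_less_top)
  show "(\<lambda>n. \<integral>\<^sup>+ w. (\<integral>\<^sup>+ v. slice_integrand (X n) lam K m c x w v \<partial>?M1) \<partial>?M0) \<longlonglongrightarrow> (\<integral>\<^sup>+ w. (\<integral>\<^sup>+ v. slice_integrand 0 lam K m c x w v \<partial>?M1) \<partial>?M0)"
  proof (rule nn_integral_dominated_convergence[where w="\<lambda>_. B"])
    show "(\<lambda>w. \<integral>\<^sup>+ v. slice_integrand (X i) lam K m c x w v \<partial>?M1) \<in> borel_measurable ?M0" for i by (rule um)
    show "(\<lambda>w. \<integral>\<^sup>+ v. slice_integrand 0 lam K m c x w v \<partial>?M1) \<in> borel_measurable ?M0" by (rule um)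
    show "(\<lambda>_. B) \<in> borel_measurable ?M0" by simp
    show "AE w in ?M0. (\<integral>\<^sup>+ v. slice_integrand (X j) lam K m c x w v \<partial>?M1) \<le> B" for j
      by (intro AE_I2 bnd)
    show "(\<integral>\<^sup>+ w. B \<partial>?M0) < \<infinity>"
      using \<open>B < \<infinity>\<close> by (simp only: nn_integral_const P0.emeasure_space_1 mult_1_right)
    show "AE w in ?M0. (\<lambda>n. \<integral>\<^sup>+ v. slice_integrand (X n) lam K m c x w v \<partial>?M1) \<longlonglongrightarrow> (\<integral>\<^sup>+ v. slice_integrand 0 lam K m c x w v \<partial>?M1)"
      by (intro AE_I2 nn_integral_slice_integrand_tendsto[OF a region_finite _ X])
  qed
qed

lemma nn_integral_cscg_density_prod:
  fixes r :: "'k \<Rightarrow> real"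
  assumes "finite KK"
  shows "(\<integral>\<^sup>+ u. ennreal (cscg_density u) * (\<Prod>k\<in>KK. ennreal (cscg_density (- complex_of_real (r k) * u))) \<partial>lborel)
     = ennreal (1 / (pi ^ card KK * (1 + (\<Sum>k\<in>KK. (r k)\<^sup>2))))"
proof -
  define S where "S = (\<Sum>k\<in>KK. (r k)\<^sup>2)"
  have S0: "S \<ge> 0" unfolding S_def by (simp add: sum_nonneg)
  have eq: "ennreal (cscg_density u) * (\<Prod>k\<in>KK. ennreal (cscg_density (- complex_of_real (r k) * u)))
      = ennreal (1 / pi ^ (card KK + 1)) * ennreal (exp (- (1 + S) * (cmod u)\<^sup>2))" for u
  proof -
    have "(\<Prod>k\<in>KK. cscg_density (- complex_of_real (r k) * u)) = (\<Prod>k\<in>KK. exp (- ((r k)\<^sup>2 * (cmod u)\<^sup>2)) / pi)"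
      by (intro prod.cong refl) (simp add: cscg_density_def norm_mult power_mult_distrib)
    also have "\<dots> = exp (- (S * (cmod u)\<^sup>2)) / pi ^ card KK"
      unfolding S_def using assms
      by (simp add: prod_dividef exp_sum[symmetric] sum_negf sum_distrib_right)
    finally have P: "(\<Prod>k\<in>KK. cscg_density (- complex_of_real (r k) * u)) = exp (- (S * (cmod u)\<^sup>2)) / pi ^ card KK" .
    have "cscg_density u * (\<Prod>k\<in>KK. cscg_density (- complex_of_real (r k) * u)) = (exp (- (cmod u)\<^sup>2) * exp (- (S * (cmod u)\<^sup>2))) / pi ^ (card KK + 1)"
      unfolding P cscg_density_def[of u] by simp
    also have "exp (- (cmod u)\<^sup>2) * exp (- (S * (cmod u)\<^sup>2)) = exp (- (1 + S) * (cmod u)\<^sup>2)"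
      unfolding mult_exp_exp by (simp add: algebra_simps)
    finally have "cscg_density u * (\<Prod>k\<in>KK. cscg_density (- complex_of_real (r k) * u)) = 1 / pi ^ (card KK + 1) * exp (- (1 + S) * (cmod u)\<^sup>2)"
      by simp
    then show ?thesis
      by (simp add: prod_ennreal cscg_density_nonneg ennreal_mult[symmetric] prod_nonneg)
  qed
  have "(\<integral>\<^sup>+ u. ennreal (cscg_density u) * (\<Prod>k\<in>KK. ennreal (cscg_density (- complex_of_real (r k) * u))) \<partial>lborel)
      = ennreal (1 / pi ^ (card KK + 1)) * (\<integral>\<^sup>+ u. ennreal (exp (- (1 + S) * (cmod u)\<^sup>2)) \<partial>lborel)"
    unfolding eq by (rule nn_integral_cmult) simp
  also have "\<dots> = ennreal (1 / pi ^ (card KK + 1)) * ennreal (pi / (1 + S))"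
    using S0 by (subst nn_integral_gauss_complex) auto
  also have "\<dots> = ennreal (1 / (pi ^ card KK * (1 + S)))"
  proof -
    have S1: "1 + S \<noteq> 0" using S0 by linarith
    have "1 / pi ^ (card KK + 1) * (pi / (1 + S)) = pi / (pi * (pi ^ card KK * (1 + S)))"
      by (simp add: mult.assoc)
    also have "\<dots> = 1 / (pi ^ card KK * (1 + S))"
      by (rule nonzero_divide_mult_cancel_left) simp
    finally have "1 / pi ^ (card KK + 1) * (pi / (1 + S)) = 1 / (pi ^ card KK * (1 + S))" .
    then show ?thesis using S0 by (simp add: ennreal_mult[symmetric])
  qed
  finally show ?thesis unfolding S_def .
qed

lemma nn_integral_std_cscg_prod_cscg_density:
  fixes r :: "'k \<Rightarrow> real"
  assumes "finite KK"
  shows "(\<integral>\<^sup>+ u. (\<Prod>k\<in>KK. ennreal (cscg_density (- complex_of_real (r k) * u))) \<partial>std_cscg)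
     = ennreal (1 / (pi ^ card KK * (1 + (\<Sum>k\<in>KK. (r k)\<^sup>2))))"
proof -
  have "(\<lambda>u. \<Prod>k\<in>KK. ennreal (cscg_density (- complex_of_real (r k) * u))) \<in> borel_measurable borel"
    by measurable
  then have "(\<integral>\<^sup>+ u. (\<Prod>k\<in>KK. ennreal (cscg_density (- complex_of_real (r k) * u))) \<partial>std_cscg)
      = (\<integral>\<^sup>+ u. ennreal (cscg_density u) * (\<Prod>k\<in>KK. ennreal (cscg_density (- complex_of_real (r k) * u))) \<partial>lborel)"
    unfolding std_cscg_eq_density by (subst nn_integral_density) auto
  also have "\<dots> = ennreal (1 / (pi ^ card KK * (1 + (\<Sum>k\<in>KK. (r k)\<^sup>2))))"
    by (rule nn_integral_cscg_density_prod[OF assms])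
  finally show ?thesis .
qed

lemma prod_Times_common_index:
  "(\<Prod>i\<in>{1..K}\<times>{1..m}. g (fst i) (w (0, snd i))) = (\<Prod>j\<in>{0::nat}\<times>{1..m}. (\<Prod>k\<in>{1..K}. g k (w j)))"
proof -
  have "(\<Prod>i\<in>{1..K}\<times>{1..m}. g (fst i) (w (0, snd i))) = (\<Prod>k\<in>{1..K}. \<Prod>l\<in>{1..m}. g k (w (0, l)))"
    by (simp add: prod.cartesian_product case_prod_beta')
  also have "\<dots> = (\<Prod>l\<in>{1..m}. \<Prod>k\<in>{1..K}. g k (w (0, l)))"
    by (rule prod.swap)
  also have "\<dots> = (\<Prod>j\<in>{0::nat}\<times>{1..m}. (\<Prod>k\<in>{1..K}. g k (w j)))"
  proof -
    have e: "{0::nat}\<times>{1..m} = (\<lambda>l. (0, l)) ` {1..m}" by auto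
    have "inj_on (\<lambda>l. (0::nat, l)) {1..m}" by (auto intro: inj_onI)
    then show ?thesis unfolding e by (simp add: prod.reindex)
  qed
  finally show ?thesis .
qed

lemma outage_integral_at_0:
  "outage_integral 0 lam K m c x
    = (\<integral>\<^sup>+ v. indicator (normalized_region K m c x) v \<partial>PiM ({1..K}\<times>{1..m}) (\<lambda>_. lborel::complex measure)) *
      ennreal (1 / (pi ^ K * (1 + (\<Sum>k\<in>{1..K}. (lam k / indep_weight lam k)\<^sup>2)))) ^ m"
proof -
  interpret N: prob_space std_cscg by (rule prob_space_std_cscg)
  interpret PN: product_sigma_finite "\<lambda>_::nat\<times>nat. std_cscg"
    by (simp add: product_sigma_finite_def N.sigma_finite_measure_axioms)
  define vol where "vol = (\<integral>\<^sup>+ v. indicator (normalized_region K m c x) v \<partial>PiM ({1..K}\<times>{1..m}) (\<lambda>_. lborel::complex measure))"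
  define f where "f u = (\<Prod>k\<in>{1..K}. ennreal (cscg_density (- complex_of_real (lam k / indep_weight lam k) * u)))" for u
  have fm: "f \<in> borel_measurable std_cscg"
  proof -
    have "f \<in> borel_measurable borel" unfolding f_def by measurable
    then show ?thesis by (subst measurable_cong_sets[of std_cscg borel]) (simp_all add: std_cscg_eq_density)
  qed
  have G: "(\<Prod>i\<in>{1..K}\<times>{1..m}. ennreal (cscg_density (inner_shift lam w i))) = (\<Prod>j\<in>{0::nat}\<times>{1..m}. f (w j))" for w
    unfolding f_def inner_shift_def
    using prod_Times_common_index[where g="\<lambda>k u. ennreal (cscg_density (- complex_of_real (lam k / indep_weight lam k) * u))" and K=K and m=m and w=w] by simp
  have inner: "(\<integral>\<^sup>+ v. slice_integrand 0 lam K m c x w v \<partial>PiM ({1..K}\<times>{1..m}) (\<lambda>_. lborel)) = vol * (\<Prod>j\<in>{0::nat}\<times>{1..m}. f (w j))" for w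
  proof -
    have "(\<integral>\<^sup>+ v. slice_integrand 0 lam K m c x w v \<partial>PiM ({1..K}\<times>{1..m}) (\<lambda>_. lborel))
        = (\<integral>\<^sup>+ v. indicator (normalized_region K m c x) v * (\<Prod>j\<in>{0::nat}\<times>{1..m}. f (w j)) \<partial>PiM ({1..K}\<times>{1..m}) (\<lambda>_. lborel))"
      unfolding slice_integrand_def G[symmetric] by (simp add: inner_scale_def)
    also have "\<dots> = vol * (\<Prod>j\<in>{0::nat}\<times>{1..m}. f (w j))"
      unfolding vol_def by (rule nn_integral_multc[OF normalized_region_measurable])
    finally show ?thesis .
  qed
  have "(\<integral>\<^sup>+ w. (\<integral>\<^sup>+ v. slice_integrand 0 lam K m c x w v \<partial>PiM ({1..K}\<times>{1..m}) (\<lambda>_. lborel)) \<partial>PiM ({0::nat}\<times>{1..m}) (\<lambda>_. std_cscg))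
      = (\<integral>\<^sup>+ w. vol * (\<Prod>j\<in>{0::nat}\<times>{1..m}. f (w j)) \<partial>PiM ({0::nat}\<times>{1..m}) (\<lambda>_. std_cscg))"
    unfolding inner ..
  also have "\<dots> = vol * (\<integral>\<^sup>+ w. (\<Prod>j\<in>{0::nat}\<times>{1..m}. f (w j)) \<partial>PiM ({0::nat}\<times>{1..m}) (\<lambda>_. std_cscg))"
  proof (rule nn_integral_cmult)
    show "(\<lambda>w. \<Prod>j\<in>{0::nat}\<times>{1..m}. f (w j)) \<in> borel_measurable (PiM ({0::nat}\<times>{1..m}) (\<lambda>_. std_cscg))"
    proof (rule borel_measurable_prod_ennreal)
      fix j assume j: "j \<in> {0::nat}\<times>{1..m}"
      show "(\<lambda>w. f (w j)) \<in> borel_measurable (PiM ({0::nat}\<times>{1..m}) (\<lambda>_. std_cscg))"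
        using measurable_compose[OF measurable_component_singleton[OF j, of "\<lambda>_. std_cscg"] fm] by simp
    qed
  qed
  also have "(\<integral>\<^sup>+ w. (\<Prod>j\<in>{0::nat}\<times>{1..m}. f (w j)) \<partial>PiM ({0::nat}\<times>{1..m}) (\<lambda>_. std_cscg)) = (\<Prod>j\<in>{0::nat}\<times>{1..m}. (\<integral>\<^sup>+ u. f u \<partial>std_cscg))"
    using PN.product_nn_integral_prod[of "{0::nat}\<times>{1..m}" "\<lambda>_. f"] fm by simp
  also have "(\<integral>\<^sup>+ u. f u \<partial>std_cscg) = ennreal (1 / (pi ^ K * (1 + (\<Sum>k\<in>{1..K}. (lam k / indep_weight lam k)\<^sup>2))))"
    unfolding f_def using nn_integral_std_cscg_prod_cscg_density[where KK="{1..K}" and r="\<lambda>k. lam k / indep_weight lam k"] by simp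
  finally show ?thesis by (simp add: outage_integral_def vol_def card_cartesian_product)
qed

lemma nn_integral_normalized_region:
  assumes K: "K \<ge> 1" and m: "m \<ge> 1" and c: "\<And>k. k \<in> {1..K} \<Longrightarrow> c k > 0" and x: "x > 1"
  shows "(\<integral>\<^sup>+ v. indicator (normalized_region K m c x) v \<partial>PiM ({1..K}\<times>{1..m}) (\<lambda>_. lborel::complex measure))
    = ennreal ((\<Prod>k\<in>{1..K}. pi ^ m / (fact (m - 1) * c k ^ m)) * g0 K m x)"
proof -
  have "(\<integral>\<^sup>+ v. indicator (normalized_region K m c x) v \<partial>PiM ({1..K}\<times>{1..m}) (\<lambda>_. lborel::complex measure))
      = (\<Prod>k\<in>{1..K}. ennreal (pi ^ m / (fact (m - 1) * c k ^ m))) *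
        (\<integral>\<^sup>+ t. indicator (prod_less_region {1..K} x) t * ennreal (\<Prod>k\<in>{1..K}. t k ^ (m - 1)) \<partial>PiM {1..K} (\<lambda>_. lborel))"
    using nn_integral_PiM_indicator_prod_block_sums[of "{1..K}" "{1..m}" c x] K m c
    unfolding normalized_region_def by simp
  also have "(\<integral>\<^sup>+ t. indicator (prod_less_region {1..K} x) t * ennreal (\<Prod>k\<in>{1..K}. t k ^ (m - 1)) \<partial>PiM {1..K} (\<lambda>_. lborel))
      = ennreal (g0 K m x)"
    using nn_integral_prod_less_region_eq[of "{1..K}" x m] g0_eq_nn_integral[of x K m] K x by simp
  also have "(\<Prod>k\<in>{1..K}. ennreal (pi ^ m / (fact (m - 1) * c k ^ m)))
      = ennreal (\<Prod>k\<in>{1..K}. pi ^ m / (fact (m - 1) * c k ^ m))"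
    using c by (intro prod_ennreal) (auto intro!: divide_nonneg_pos)
  moreover have "(\<Prod>k\<in>{1..K}. pi ^ m / (fact (m - 1) * c k ^ m)) \<ge> 0"
    using c by (intro prod_nonneg) (auto intro!: divide_nonneg_pos)
  ultimately show ?thesis
    by (simp add: ennreal_mult')
qed

lemma outage_integral_tendsto:
  assumes K: "K \<ge> 1" and m: "m \<ge> 1" and c: "\<And>k. k \<in> {1..K} \<Longrightarrow> c k > 0"
    and lam: "\<And>k. k \<in> {1..K} \<Longrightarrow> 0 \<le> lam k \<and> lam k < 1" and x: "x > 1"
  shows "((\<lambda>\<gamma>. enn2real (outage_integral \<gamma> lam K m c x)) \<longlongrightarrow>
     (\<Prod>k\<in>{1..K}. pi ^ m / (fact (m - 1) * c k ^ m)) * g0 K m x *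
     (1 / (pi ^ K * (1 + (\<Sum>k\<in>{1..K}. (lam k)\<^sup>2 / (1 - (lam k)\<^sup>2))))) ^ m) at_top"
proof -
  let ?S = "\<Sum>k\<in>{1..K}. (lam k)\<^sup>2 / (1 - (lam k)\<^sup>2)"
  have "(indep_weight lam k)\<^sup>2 = 1 - (lam k)\<^sup>2" if "k \<in> {1..K}" for k
    using lam[OF that] by (intro indep_weight_sq) auto
  then have S: "(\<Sum>k\<in>{1..K}. (lam k / indep_weight lam k)\<^sup>2) = ?S"
    by (intro sum.cong refl) (simp add: power_divide)
  have S_nonneg: "?S \<ge> 0"
    using lam by (intro sum_nonneg) (auto simp: power_less_one_iff abs_square_less_1 less_imp_le)
  have w: "\<And>k. k \<in> {1..K} \<Longrightarrow> indep_weight lam k > 0"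
    using lam by (intro indep_weight_pos) auto
  have vol: "(\<integral>\<^sup>+ v. indicator (normalized_region K m c x) v \<partial>PiM ({1..K}\<times>{1..m}) (\<lambda>_. lborel::complex measure))
      = ennreal ((\<Prod>k\<in>{1..K}. pi ^ m / (fact (m - 1) * c k ^ m)) * g0 K m x)"
    using K m c x by (rule nn_integral_normalized_region)
  have volume_nonneg: "(\<Prod>k\<in>{1..K}. pi ^ m / (fact (m - 1) * c k ^ m)) * g0 K m x \<ge> 0"
    using c g0_pos[OF K m x] by (intro mult_nonneg_nonneg prod_nonneg) (auto intro!: divide_nonneg_pos)
  then have limit_nonneg: "(\<Prod>k\<in>{1..K}. pi ^ m / (fact (m - 1) * c k ^ m)) * g0 K m x * (1 / (pi ^ K * (1 + ?S))) ^ m \<ge> 0"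
    using S_nonneg by simp
  have "((\<lambda>\<gamma>. outage_integral \<gamma> lam K m c x) \<longlongrightarrow> outage_integral 0 lam K m c x) at_top"
    by (rule outage_integral_tendsto_at_0) (use w vol in auto)
  also have "outage_integral 0 lam K m c x = ennreal ((\<Prod>k\<in>{1..K}. pi ^ m / (fact (m - 1) * c k ^ m)) * g0 K m x) *
      ennreal (1 / (pi ^ K * (1 + ?S))) ^ m"
    unfolding outage_integral_at_0 vol S ..
  also have "\<dots> = ennreal ((\<Prod>k\<in>{1..K}. pi ^ m / (fact (m - 1) * c k ^ m)) * g0 K m x *
      (1 / (pi ^ K * (1 + ?S))) ^ m)"
  proof -
    have "1 / (pi ^ K * (1 + ?S)) \<ge> 0"
      using S_nonneg by simp
    then show ?thesis
      by (simp only: ennreal_power ennreal_mult'[OF volume_nonneg])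
  qed
  finally show ?thesis
    using limit_nonneg by (rule tendsto_enn2real)
qed

lemma prod_inner_scale_sq:
  assumes "\<gamma> > 0" and lam: "\<And>k. k \<in> {1..K} \<Longrightarrow> \<bar>lam k\<bar> \<le> 1"
  shows "(\<Prod>i\<in>{1..K}\<times>{1..m}. (inner_scale \<gamma> lam i)\<^sup>2) = (\<Prod>k\<in>{1..K}. (1 / (1 - (lam k)\<^sup>2)) ^ m) / \<gamma> ^ (m * K)"
proof -
  have "(\<Prod>i\<in>{1..K}\<times>{1..m}. (inner_scale \<gamma> lam i)\<^sup>2) = (\<Prod>k\<in>{1..K}. \<Prod>l\<in>{1..m}. (inner_scale \<gamma> lam (k, l))\<^sup>2)"
    by (simp add: prod.cartesian_product)
  also have "\<dots> = (\<Prod>k\<in>{1..K}. ((1 / (1 - (lam k)\<^sup>2)) / \<gamma>) ^ m)"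
    using assms by (intro prod.cong refl) (simp add: inner_scale_def power_divide power_mult_distrib indep_weight_sq)
  also have "\<dots> = (\<Prod>k\<in>{1..K}. (1 / (1 - (lam k)\<^sup>2)) ^ m) / (\<Prod>k\<in>{1..K}. \<gamma> ^ m)"
    by (simp add: power_divide prod_dividef power_mult_distrib prod.distrib)
  also have "(\<Prod>k\<in>{1..K}. \<gamma> ^ m) = \<gamma> ^ (m * K)"
    by (simp add: power_mult)
  finally show ?thesis .
qed

lemma p_out_eq_outage_integral:
  assumes m: "m \<ge> 1" and \<sigma>2: "\<And>k. k \<in> {1..K} \<Longrightarrow> \<sigma>2 k > 0"
    and lam: "\<And>k. k \<in> {1..K} \<Longrightarrow> 0 \<le> lam k \<and> lam k < 1"
    and M: "prob_space M" and ind: "prob_space.indep_vars M (\<lambda>_. borel) Z ({0..K} \<times> {1..m})"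
    and dist: "\<And>i. i \<in> {0..K} \<times> {1..m} \<Longrightarrow> distr M borel (Z i) = std_cscg"
    and \<gamma>: "\<gamma> > 0"
  shows "p_out M Z K m \<sigma>2 lam \<theta> R \<gamma> = (\<Prod>k\<in>{1..K}. (1 / (1 - (lam k)\<^sup>2)) ^ m) / \<gamma> ^ (m * K) *
     enn2real (outage_integral \<gamma> lam K m (\<lambda>k. \<theta> k * \<sigma>2 k / real m) (2 powr R))"
proof -
  have w: "\<And>k. k \<in> {1..K} \<Longrightarrow> indep_weight lam k > 0"
    using lam by (intro indep_weight_pos) auto
  have "p_out M Z K m \<sigma>2 lam \<theta> R \<gamma> = measure (PiM ({0..K}\<times>{1..m}) (\<lambda>_. std_cscg))
     {z \<in> space (PiM ({0..K}\<times>{1..m}) (\<lambda>_. std_cscg)).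
       (\<Prod>k\<in>{1..K}. 1 + \<gamma> * \<theta> k * (abs_h m \<sigma>2 lam z k)\<^sup>2) < 2 powr R}"
    by (rule p_out_eq_measure_PiM[OF M ind dist m])
  also have "\<dots> = enn2real (ennreal (\<Prod>i\<in>{1..K}\<times>{1..m}. (inner_scale \<gamma> lam i)\<^sup>2) *
     outage_integral \<gamma> lam K m (\<lambda>k. \<theta> k * \<sigma>2 k / real m) (2 powr R))"
    unfolding measure_def by (subst emeasure_outage_eq_outage_integral[OF \<gamma> w \<sigma>2 m]) simp_all
  also have "\<dots> = (\<Prod>k\<in>{1..K}. (1 / (1 - (lam k)\<^sup>2)) ^ m) / \<gamma> ^ (m * K) *
     enn2real (outage_integral \<gamma> lam K m (\<lambda>k. \<theta> k * \<sigma>2 k / real m) (2 powr R))"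
  proof -
    have "(\<Prod>i\<in>{1..K}\<times>{1..m}. (inner_scale \<gamma> lam i)\<^sup>2) = (\<Prod>k\<in>{1..K}. (1 / (1 - (lam k)\<^sup>2)) ^ m) / \<gamma> ^ (m * K)"
      using lam by (intro prod_inner_scale_sq[OF \<gamma>]) (simp add: abs_le_iff less_imp_le)
    moreover have "(\<Prod>i\<in>{1..K}\<times>{1..m}. (inner_scale \<gamma> lam i)\<^sup>2) \<ge> 0"
      by (simp add: prod_nonneg)
    ultimately show ?thesis
      by (simp add: enn2real_mult)
  qed
  finally show ?thesis .
qed

lemma p_out_asy_eq:
  assumes m: "m \<ge> 1" and \<sigma>2: "\<And>k. k \<in> {1..K} \<Longrightarrow> \<sigma>2 k > 0" and \<theta>: "\<And>k. k \<in> {1..K} \<Longrightarrow> \<theta> k > 0"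
    and lam: "\<And>k. k \<in> {1..K} \<Longrightarrow> 0 \<le> lam k \<and> lam k < 1"
  defines "c \<equiv> \<lambda>k. \<theta> k * \<sigma>2 k / real m"
  shows "p_out_asy K m \<sigma>2 lam \<theta> R \<gamma> = (\<Prod>k\<in>{1..K}. (1 / (1 - (lam k)\<^sup>2)) ^ m) / \<gamma> ^ (m * K) *
     ((\<Prod>k\<in>{1..K}. pi ^ m / (fact (m - 1) * c k ^ m)) * g0 K m (2 powr R) *
      (1 / (pi ^ K * (1 + (\<Sum>k\<in>{1..K}. (lam k)\<^sup>2 / (1 - (lam k)\<^sup>2))))) ^ m)"
proof -
  have Gamma_m: "Gamma (real m) = fact (m - 1)"
    using m Gamma_fact[of "m - 1"] by (simp add: of_nat_diff)
  have factor: "(1 / (1 - (lam k)\<^sup>2)) ^ m * (pi ^ m / (fact (m - 1) * c k ^ m)) * (1 / pi) ^ m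
      = (1 / Gamma (real m)) * (real m / (\<theta> k * \<sigma>2 k * (1 - (lam k)\<^sup>2))) ^ m" if k: "k \<in> {1..K}" for k
  proof -
    define A where "A = 1 - (lam k)\<^sup>2"
    have "A > 0" using lam[OF k] by (simp add: A_def power_less_one_iff abs_square_less_1)
    then have "(1 / A) ^ m * (pi ^ m / (fact (m - 1) * c k ^ m)) * (1 / pi) ^ m
        = (1 / fact (m - 1)) * (real m / (\<theta> k * \<sigma>2 k * A)) ^ m"
      using \<sigma>2[OF k] \<theta>[OF k] m unfolding c_def by (simp add: power_divide power_mult_distrib field_simps)
    then show ?thesis unfolding A_def Gamma_m .
  qed
  have "(1 / (pi ^ K * (1 + (\<Sum>k\<in>{1..K}. (lam k)\<^sup>2 / (1 - (lam k)\<^sup>2))))) ^ m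
      = inverse ((1 + (\<Sum>k\<in>{1..K}. (lam k)\<^sup>2 / (1 - (lam k)\<^sup>2))) ^ m) * (\<Prod>k\<in>{1..K}. (1 / pi) ^ m)"
    by (simp add: power_mult_distrib power_divide power_mult[symmetric] mult.commute inverse_eq_divide)
  moreover have "(\<Prod>k\<in>{1..K}. (1 / (1 - (lam k)\<^sup>2)) ^ m) * (\<Prod>k\<in>{1..K}. pi ^ m / (fact (m - 1) * c k ^ m)) *
      (\<Prod>k\<in>{1..K}. (1 / pi) ^ m)
      = (\<Prod>k\<in>{1..K}. (1 / Gamma (real m)) * (real m / (\<theta> k * \<sigma>2 k * (1 - (lam k)\<^sup>2))) ^ m)"
    by (simp only: prod.distrib[symmetric]) (intro prod.cong refl factor)
  ultimately show ?thesis
    unfolding p_out_asy_def by (simp add: field_simps)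
qed

theorem mainTheorem5:
  fixes M :: "'a measure" and Z :: "nat \<times> nat \<Rightarrow> 'a \<Rightarrow> complex"
    and K m :: nat and \<sigma>2 lam \<theta> :: "nat \<Rightarrow> real" and R :: real
  assumes "K \<ge> 1" and "m \<ge> 1"
    and "\<And>k. k \<in> {1..K} \<Longrightarrow> \<sigma>2 k > 0"
    and "\<And>k. k \<in> {1..K} \<Longrightarrow> 0 \<le> lam k \<and> lam k < 1"
    and "\<And>k. k \<in> {1..K} \<Longrightarrow> \<theta> k > 0"
    and "(\<Sum>k=1..K. \<theta> k) = 1"
    and "R > 0"
    and "prob_space M"
    and "prob_space.indep_vars M (\<lambda>_. borel) Z ({0..K} \<times> {1..m})"
    and "\<And>i. i \<in> {0..K} \<times> {1..m} \<Longrightarrow> distr M borel (Z i) = std_cscg"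
  shows "(\<lambda>\<gamma>. p_out M Z K m \<sigma>2 lam \<theta> R \<gamma>) \<sim>[at_top] (\<lambda>\<gamma>. p_out_asy K m \<sigma>2 lam \<theta> R \<gamma>)"
proof -
  define c where "c = (\<lambda>k. \<theta> k * \<sigma>2 k / real m)"
  define scale where "scale \<gamma> = (\<Prod>k\<in>{1..K}. (1 / (1 - (lam k)\<^sup>2)) ^ m) / \<gamma> ^ (m * K)" for \<gamma> :: real
  define limit where "limit = (\<Prod>k\<in>{1..K}. pi ^ m / (fact (m - 1) * c k ^ m)) * g0 K m (2 powr R) *
     (1 / (pi ^ K * (1 + (\<Sum>k\<in>{1..K}. (lam k)\<^sup>2 / (1 - (lam k)\<^sup>2))))) ^ m"
  have c_pos: "c k > 0" if "k \<in> {1..K}" for k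
    using assms(2,3,5) that by (simp add: c_def)
  have "((\<lambda>\<gamma>. enn2real (outage_integral \<gamma> lam K m c (2 powr R))) \<longlongrightarrow> limit) at_top"
    unfolding limit_def by (rule outage_integral_tendsto) (use assms c_pos in auto)
  moreover have "limit > 0"
    unfolding limit_def using c_pos assms(1,2,4,7)
    by (intro mult_pos_pos g0_pos prod_pos divide_pos_pos zero_less_power add_pos_nonneg sum_nonneg)
       (auto simp: power_less_one_iff abs_square_less_1 less_imp_le)
  ultimately have equiv: "(\<lambda>\<gamma>. scale \<gamma> * enn2real (outage_integral \<gamma> lam K m c (2 powr R))) \<sim>[at_top] (\<lambda>\<gamma>. scale \<gamma> * limit)"
    by (intro asymp_equiv_mult asymp_equiv_refl tendsto_imp_asymp_equiv_const) auto
  have p_out: "eventually (\<lambda>\<gamma>. p_out M Z K m \<sigma>2 lam \<theta> R \<gamma> = scale \<gamma> * enn2real (outage_integral \<gamma> lam K m c (2 powr R))) at_top"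
    using eventually_gt_at_top[of 0]
    by eventually_elim (simp only: p_out_eq_outage_integral[OF assms(2,3,4,8,9,10)] scale_def c_def)
  have p_out_asy: "\<forall>\<gamma>. p_out_asy K m \<sigma>2 lam \<theta> R \<gamma> = scale \<gamma> * limit"
    unfolding scale_def limit_def c_def using assms by (intro allI p_out_asy_eq) auto
  show ?thesis
    using asymp_equiv_cong[OF p_out always_eventually[OF p_out_asy]] equiv by simp
qed

end
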